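(* Let $M$ be a uniformly discrete pointed metric space. Then every preserved extreme point of $B_{\mathcal F(M)}$ is a strongly exposed point of $B_{\mathcal F(M)}$.
   Context: A pointed metric space $M$ has a distinguished origin $0$; it is uniformly discrete if $\inf\{d(u,v):u\neq v\}>0$. $\mathrm{Lip}_0(M)$ is the Banach space of real Lipschitz functions on $M$ vanishing at $0$ with the best Lipschitz constant as norm; $\delta(x)$ is evaluation at $x$, and the Lipschitz free space $\mathcal F(M)$ is the closed linear span of $\delta(M)$ in $\mathrm{Lip}_0(M)^*$, with $\mathcal F(M)^*=\mathrm{Lip}_0(M)$. A point of $B_X$ ($X$ a Banach space) is a preserved extreme point if it is an extreme point of $B_{X^{**}}$. A point $x\in B_X$ is strongly exposed if there is $f\in X^*$ with $f(x)=\|f\|$ such that every sequence $(x_n)\subset B_X$ with $f(x_n)\to f(x)$ converges in norm to $x$. *)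

theory Defs
  imports "HOL-Analysis.Analysis"
begin

text \<open>The pointed metric space M is the type 'a (a metric space) with origin z.\<close>

definition uniformly_discrete :: "'a::metric_space itself \<Rightarrow> bool" where
  "uniformly_discrete _ \<longleftrightarrow> (\<exists>\<theta>>0. \<forall>u v::'a. u \<noteq> v \<longrightarrow> \<theta> \<le> dist u v)"

definition lip0 :: "'a::metric_space \<Rightarrow> ('a \<Rightarrow> real) set" where
  "lip0 z = {f. f z = 0 \<and> (\<exists>L. \<forall>x y. \<bar>f x - f y\<bar> \<le> L * dist x y)}"

text \<open>Best Lipschitz constant (0 for a one-point space).\<close>
definition lipnorm :: "('a::metric_space \<Rightarrow> real) \<Rightarrow> real" where
  "lipnorm f = Sup ({0} \<union> {\<bar>f x - f y\<bar> / dist x y | x y. x \<noteq> y})"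

text \<open>Lip_0(M)^*: bounded linear functionals on Lip_0(M), normalised to be 0 off Lip_0(M).\<close>
definition lipdual :: "'a::metric_space \<Rightarrow> (('a \<Rightarrow> real) \<Rightarrow> real) set" where
  "lipdual z = {\<phi>.
     (\<forall>f\<in>lip0 z. \<forall>g\<in>lip0 z. \<forall>a b. \<phi> (\<lambda>x. a * f x + b * g x) = a * \<phi> f + b * \<phi> g) \<and>
     (\<exists>C. \<forall>f\<in>lip0 z. \<bar>\<phi> f\<bar> \<le> C * lipnorm f) \<and>
     (\<forall>f. f \<notin> lip0 z \<longrightarrow> \<phi> f = 0)}"

definition dualnorm :: "'a::metric_space \<Rightarrow> (('a \<Rightarrow> real) \<Rightarrow> real) \<Rightarrow> real" where
  "dualnorm z \<phi> = Sup ({0} \<union> {\<bar>\<phi> f\<bar> | f. f \<in> lip0 z \<and> lipnorm f \<le> 1})"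

definition delta :: "'a::metric_space \<Rightarrow> 'a \<Rightarrow> ('a \<Rightarrow> real) \<Rightarrow> real" where
  "delta z x = (\<lambda>f. if f \<in> lip0 z then f x else 0)"

definition delta_span :: "'a::metric_space \<Rightarrow> (('a \<Rightarrow> real) \<Rightarrow> real) set" where
  "delta_span z = {\<nu>. \<exists>(n::nat) (c::nat \<Rightarrow> real) (p::nat \<Rightarrow> 'a).
       \<nu> = (\<lambda>f. \<Sum>i<n. c i * delta z (p i) f)}"

text \<open>The Lipschitz free space: closed linear span of delta(M) in Lip_0(M)^*.\<close>
definition free :: "'a::metric_space \<Rightarrow> (('a \<Rightarrow> real) \<Rightarrow> real) set" where
  "free z = {\<mu> \<in> lipdual z. \<forall>\<epsilon>>0. \<exists>\<nu>\<in>delta_span z. dualnorm z (\<lambda>f. \<mu> f - \<nu> f) < \<epsilon>}"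

definition dual_ball :: "'a::metric_space \<Rightarrow> (('a \<Rightarrow> real) \<Rightarrow> real) set" where
  "dual_ball z = {\<phi> \<in> lipdual z. dualnorm z \<phi> \<le> 1}"

definition free_ball :: "'a::metric_space \<Rightarrow> (('a \<Rightarrow> real) \<Rightarrow> real) set" where
  "free_ball z = free z \<inter> dual_ball z"

definition extreme_pt :: "(('a \<Rightarrow> real) \<Rightarrow> real) set \<Rightarrow> (('a \<Rightarrow> real) \<Rightarrow> real) \<Rightarrow> bool" where
  "extreme_pt K \<mu> \<longleftrightarrow> \<mu> \<in> K \<and>
     (\<forall>a\<in>K. \<forall>b\<in>K. \<mu> = (\<lambda>f. (a f + b f) / 2) \<longrightarrow> a = b)"

text \<open>Preserved extreme point: extreme point of the bidual ball. Via F(M)^* = Lip_0(M)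
  isometrically, F(M)^** = Lip_0(M)^* and the canonical embedding is the inclusion.\<close>
definition preserved_extreme :: "'a::metric_space \<Rightarrow> (('a \<Rightarrow> real) \<Rightarrow> real) \<Rightarrow> bool" where
  "preserved_extreme z \<mu> \<longleftrightarrow> \<mu> \<in> free_ball z \<and> extreme_pt (dual_ball z) \<mu>"

text \<open>Strongly exposed point of B_F(M); functionals on F(M) are given by f in Lip_0(M).\<close>
definition strongly_exposed :: "'a::metric_space \<Rightarrow> (('a \<Rightarrow> real) \<Rightarrow> real) \<Rightarrow> bool" where
  "strongly_exposed z \<mu> \<longleftrightarrow> \<mu> \<in> free_ball z \<and>
     (\<exists>g\<in>lip0 z. \<mu> g = lipnorm g \<and>
        (\<forall>s::nat \<Rightarrow> (('a \<Rightarrow> real) \<Rightarrow> real). (\<forall>n. s n \<in> free_ball z) \<longrightarrow>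
            (\<lambda>n. s n g) \<longlonglongrightarrow> \<mu> g \<longrightarrow>
            (\<lambda>n. dualnorm z (\<lambda>f. s n f - \<mu> f)) \<longlonglongrightarrow> 0))"

end

theory Submission
  imports Defs
begin

(* The de Leeuw transform f |-> ((f p - f q) / dist p q) maps Lip_0(M) isometrically into the
   bounded functions on M x M, so by Hahn-Banach a functional mu of norm at most one extends to a
   functional Lambda dominated by the supremum. Restricting Lambda to a set S of pairs splits mu
   into parts of norms Lambda(1_S) and 1 - Lambda(1_S); when mu is extreme, both parts are
   multiples of mu. In a uniformly discrete space indicators of points are Lipschitz and an
   element of the free space is determined by its values on them, so Lambda concentrates on the
   pairs through two points and mu is a molecule (delta x - delta y) / dist x y. If points
   p outside {x, y} made dist x p + dist p y arbitrarily close to dist x y, a second extension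
   would give the pairs through x (or y) mass less than one, contradicting this concentration.
   The resulting uniform gap yields a 1-Lipschitz function that is k-Lipschitz, k < 1, away
   from the pair {x, y}; it strongly exposes the molecule. *)

section \<open>Lipschitz norm and its dual\<close>

lemma lipnorm_bdd_above:
  assumes "f \<in> lip0 z"
  shows "bdd_above ({0} \<union> {\<bar>f x - f y\<bar> / dist x y | x y. x \<noteq> y})"
proof -
  from assms obtain L where L: "\<And>x y. \<bar>f x - f y\<bar> \<le> L * dist x y" by (auto simp: lip0_def)
  have "\<bar>f x - f y\<bar> \<le> max L 0 * dist x y" for x y
    using L[of x y] mult_right_mono[OF max.cobounded1[of L 0] zero_le_dist[of x y]] by linarith
  then have "\<bar>f x - f y\<bar> / dist x y \<le> max L 0" if "x \<noteq> y" for x y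
    using that by (simp add: pos_divide_le_eq)
  then show ?thesis by (intro bdd_aboveI[where M="max L 0"]) auto
qed

lemma lipnorm_nonneg: "f \<in> lip0 z \<Longrightarrow> 0 \<le> lipnorm f"
  unfolding lipnorm_def by (rule cSup_upper[OF _ lipnorm_bdd_above]) auto

lemma abs_diff_le_lipnorm:
  assumes "f \<in> lip0 z"
  shows "\<bar>f x - f y\<bar> \<le> lipnorm f * dist x y"
proof (cases "x = y")
  case False
  have "\<bar>f x - f y\<bar> / dist x y \<le> lipnorm f"
    unfolding lipnorm_def by (rule cSup_upper[OF _ lipnorm_bdd_above[OF assms]]) (use False in blast)
  then show ?thesis using False by (simp add: pos_divide_le_eq)
qed simp

lemma lipnorm_leI:
  assumes "\<And>x y. x \<noteq> y \<Longrightarrow> \<bar>f x - f y\<bar> \<le> L * dist x y" "0 \<le> L"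
  shows "lipnorm f \<le> L"
  unfolding lipnorm_def by (rule cSup_least) (auto simp: pos_divide_le_eq assms)

lemma lip0I: "f z = 0 \<Longrightarrow> (\<And>x y. \<bar>f x - f y\<bar> \<le> L * dist x y) \<Longrightarrow> f \<in> lip0 z"
  by (auto simp: lip0_def)

lemma lip0_origin: "f \<in> lip0 z \<Longrightarrow> f z = 0"
  by (auto simp: lip0_def)

lemma abs_lincomb_le: "\<bar>a * u + b * v\<bar> \<le> \<bar>a\<bar> * \<bar>u\<bar> + \<bar>b\<bar> * \<bar>v::real\<bar>"
  by (metis abs_mult abs_triangle_ineq)

lemma lincomb_lipschitz:
  assumes "f \<in> lip0 z" "g \<in> lip0 z"
  shows "\<bar>(a * f x + b * g x) - (a * f y + b * g y)\<bar> \<le> (\<bar>a\<bar> * lipnorm f + \<bar>b\<bar> * lipnorm g) * dist x y"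
proof -
  have "\<bar>(a * f x + b * g x) - (a * f y + b * g y)\<bar> = \<bar>a * (f x - f y) + b * (g x - g y)\<bar>"
    by (simp add: algebra_simps)
  also have "\<dots> \<le> \<bar>a\<bar> * \<bar>f x - f y\<bar> + \<bar>b\<bar> * \<bar>g x - g y\<bar>" by (rule abs_lincomb_le)
  also have "\<dots> \<le> \<bar>a\<bar> * (lipnorm f * dist x y) + \<bar>b\<bar> * (lipnorm g * dist x y)"
    by (intro add_mono mult_left_mono abs_diff_le_lipnorm[OF assms(1)] abs_diff_le_lipnorm[OF assms(2)]) auto
  finally show ?thesis by (simp add: algebra_simps)
qed

lemma lip0_lincomb:
  assumes "f \<in> lip0 z" "g \<in> lip0 z"
  shows "(\<lambda>x. a * f x + b * g x) \<in> lip0 z"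
  by (rule lip0I[OF _ lincomb_lipschitz[OF assms]]) (simp add: lip0_origin[OF assms(1)] lip0_origin[OF assms(2)])

lemma lip0_scale: "f \<in> lip0 z \<Longrightarrow> (\<lambda>x. a * f x) \<in> lip0 z"
  using lip0_lincomb[of f z f a 0] by simp

lemma lipnorm_scale_le: "f \<in> lip0 z \<Longrightarrow> lipnorm (\<lambda>x. a * f x) \<le> \<bar>a\<bar> * lipnorm f"
  using lincomb_lipschitz[of f z f, where b=0] by (intro lipnorm_leI) (simp_all add: lipnorm_nonneg)

lemma lip0_zero_fun: "(\<lambda>x. 0) \<in> lip0 z"
  by (rule lip0I[of _ _ 0]) auto

lemma lipnorm_eq_0_imp:
  assumes "f \<in> lip0 z" "lipnorm f = 0"
  shows "f = (\<lambda>x. 0)"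
proof
  fix x
  show "f x = 0" using abs_diff_le_lipnorm[OF assms(1), of x z] assms(2) lip0_origin[OF assms(1)] by simp
qed

lemma lipdual_lincomb:
  "\<phi> \<in> lipdual z \<Longrightarrow> f \<in> lip0 z \<Longrightarrow> g \<in> lip0 z \<Longrightarrow> \<phi> (\<lambda>x. a * f x + b * g x) = a * \<phi> f + b * \<phi> g"
  by (auto simp: lipdual_def)

lemma lipdual_outside: "\<phi> \<in> lipdual z \<Longrightarrow> f \<notin> lip0 z \<Longrightarrow> \<phi> f = 0"
  by (auto simp: lipdual_def)

lemma lipdual_scale: "\<phi> \<in> lipdual z \<Longrightarrow> f \<in> lip0 z \<Longrightarrow> \<phi> (\<lambda>x. a * f x) = a * \<phi> f"
  using lipdual_lincomb[of \<phi> z f f a 0] by simp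

lemma lipdual_zero_fun: "\<phi> \<in> lipdual z \<Longrightarrow> \<phi> (\<lambda>x. 0) = 0"
  using lipdual_scale[of \<phi> z "\<lambda>x. 0" 0] lip0_zero_fun[of z] by simp

lemma lipdualI:
  assumes "\<And>f g a b. f \<in> lip0 z \<Longrightarrow> g \<in> lip0 z \<Longrightarrow> \<phi> (\<lambda>x. a * f x + b * g x) = a * \<phi> f + b * \<phi> g"
    and "\<And>f. f \<in> lip0 z \<Longrightarrow> \<bar>\<phi> f\<bar> \<le> C * lipnorm f"
    and "\<And>f. f \<notin> lip0 z \<Longrightarrow> \<phi> f = 0"
  shows "\<phi> \<in> lipdual z"
  unfolding lipdual_def using assms by blast

lemma dualnorm_bdd_above:
  assumes "\<phi> \<in> lipdual z"
  shows "bdd_above ({0} \<union> {\<bar>\<phi> f\<bar> | f. f \<in> lip0 z \<and> lipnorm f \<le> 1})"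
proof -
  from assms obtain C where C: "\<And>f. f \<in> lip0 z \<Longrightarrow> \<bar>\<phi> f\<bar> \<le> C * lipnorm f"
    unfolding lipdual_def by blast
  have "\<bar>\<phi> f\<bar> \<le> max C 0" if "f \<in> lip0 z" "lipnorm f \<le> 1" for f
  proof -
    have "C * lipnorm f \<le> max C 0 * lipnorm f"
      by (intro mult_right_mono lipnorm_nonneg[OF that(1)]) simp
    also have "\<dots> \<le> max C 0" using that lipnorm_nonneg[OF that(1)] by (simp add: mult_left_le)
    finally show ?thesis using C[OF that(1)] by linarith
  qed
  then show ?thesis by (intro bdd_aboveI[where M="max C 0"]) auto
qed

lemma dualnorm_nonneg: "\<phi> \<in> lipdual z \<Longrightarrow> 0 \<le> dualnorm z \<phi>"
  unfolding dualnorm_def by (rule cSup_upper[OF _ dualnorm_bdd_above]) auto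

lemma abs_le_dualnorm_lipnorm:
  assumes "\<phi> \<in> lipdual z" "f \<in> lip0 z"
  shows "\<bar>\<phi> f\<bar> \<le> dualnorm z \<phi> * lipnorm f"
proof (cases "lipnorm f = 0")
  case True
  then show ?thesis using lipnorm_eq_0_imp[OF assms(2)] lipdual_zero_fun[OF assms(1)] by simp
next
  case False
  define L where "L = lipnorm f"
  have L: "L > 0" using False lipnorm_nonneg[OF assms(2)] unfolding L_def by simp
  have "lipnorm (\<lambda>x. (1/L) * f x) \<le> 1"
    using lipnorm_scale_le[OF assms(2), of "1/L"] L by (simp add: L_def)
  then have "\<bar>\<phi> (\<lambda>x. (1/L) * f x)\<bar> \<le> dualnorm z \<phi>"
    unfolding dualnorm_def using lip0_scale[OF assms(2)]
    by (intro cSup_upper[OF _ dualnorm_bdd_above[OF assms(1)]]) blast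
  then have "\<bar>\<phi> f\<bar> / L \<le> dualnorm z \<phi>" using lipdual_scale[OF assms, of "1/L"] L by simp
  then show ?thesis using L by (simp add: L_def pos_divide_le_eq)
qed

lemma dualnorm_leI:
  assumes "0 \<le> C" "\<And>f. f \<in> lip0 z \<Longrightarrow> \<bar>\<phi> f\<bar> \<le> C * lipnorm f"
  shows "dualnorm z \<phi> \<le> C"
  unfolding dualnorm_def
proof (rule cSup_least)
  fix t assume "t \<in> {0} \<union> {\<bar>\<phi> f\<bar> | f. f \<in> lip0 z \<and> lipnorm f \<le> 1}"
  then show "t \<le> C"
  proof
    assume "t \<in> {\<bar>\<phi> f\<bar> | f. f \<in> lip0 z \<and> lipnorm f \<le> 1}"
    then obtain f where t: "t = \<bar>\<phi> f\<bar>" "f \<in> lip0 z" "lipnorm f \<le> 1" by blast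
    have "\<bar>\<phi> f\<bar> \<le> C * lipnorm f" using assms t by blast
    also have "\<dots> \<le> C" using t(3) assms(1) by (simp add: mult_left_le)
    finally show ?thesis using t by simp
  qed (use assms in simp)
qed simp

lemma lipdual_lincomb_fun:
  assumes "A \<in> lipdual z" "B \<in> lipdual z"
  shows "(\<lambda>f. a * A f + b * B f) \<in> lipdual z"
proof (rule lipdualI[where C="\<bar>a\<bar> * dualnorm z A + \<bar>b\<bar> * dualnorm z B"])
  fix f g :: "'a \<Rightarrow> real" and c d :: real assume fg: "f \<in> lip0 z" "g \<in> lip0 z"
  show "a * A (\<lambda>x. c * f x + d * g x) + b * B (\<lambda>x. c * f x + d * g x) =
        c * (a * A f + b * B f) + d * (a * A g + b * B g)"
    using lipdual_lincomb[OF assms(1) fg] lipdual_lincomb[OF assms(2) fg] by (simp add: algebra_simps)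
next
  fix f :: "'a \<Rightarrow> real" assume f: "f \<in> lip0 z"
  have "\<bar>a * A f + b * B f\<bar> \<le> \<bar>a\<bar> * \<bar>A f\<bar> + \<bar>b\<bar> * \<bar>B f\<bar>" by (rule abs_lincomb_le)
  also have "\<dots> \<le> \<bar>a\<bar> * (dualnorm z A * lipnorm f) + \<bar>b\<bar> * (dualnorm z B * lipnorm f)"
    by (intro add_mono mult_left_mono abs_le_dualnorm_lipnorm assms f) auto
  finally show "\<bar>a * A f + b * B f\<bar> \<le> (\<bar>a\<bar> * dualnorm z A + \<bar>b\<bar> * dualnorm z B) * lipnorm f"
    by (simp add: algebra_simps)
next
  fix f :: "'a \<Rightarrow> real" assume "f \<notin> lip0 z"
  then show "a * A f + b * B f = 0" using lipdual_outside[OF assms(1)] lipdual_outside[OF assms(2)] by simp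
qed

lemma lipdual_scale_fun: "A \<in> lipdual z \<Longrightarrow> (\<lambda>f. a * A f) \<in> lipdual z"
  using lipdual_lincomb_fun[of A z A a 0] by simp

lemma lipdual_diff_fun: "A \<in> lipdual z \<Longrightarrow> B \<in> lipdual z \<Longrightarrow> (\<lambda>f. A f - B f) \<in> lipdual z"
  using lipdual_lincomb_fun[of A z B 1 "-1"] by simp

lemma abs_diff_le_dualnorm:
  assumes "A \<in> lipdual z" "B \<in> lipdual z" "dualnorm z (\<lambda>f. A f - B f) < \<epsilon>" "f \<in> lip0 z"
  shows "\<bar>A f - B f\<bar> \<le> \<epsilon> * lipnorm f"
proof -
  have "\<bar>A f - B f\<bar> \<le> dualnorm z (\<lambda>f. A f - B f) * lipnorm f"
    using abs_le_dualnorm_lipnorm[OF lipdual_diff_fun[OF assms(1,2)] assms(4)] by simp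
  also have "\<dots> \<le> \<epsilon> * lipnorm f" using assms(3) lipnorm_nonneg[OF assms(4)] by (intro mult_right_mono) auto
  finally show ?thesis .
qed

lemma dual_ball_le_lipnorm:
  assumes "\<phi> \<in> dual_ball z" "f \<in> lip0 z"
  shows "\<bar>\<phi> f\<bar> \<le> lipnorm f"
proof -
  have "\<bar>\<phi> f\<bar> \<le> dualnorm z \<phi> * lipnorm f"
    using assms by (intro abs_le_dualnorm_lipnorm) (auto simp: dual_ball_def)
  also have "\<dots> \<le> lipnorm f"
    using assms lipnorm_nonneg[OF assms(2)] dualnorm_nonneg
    by (intro mult_left_le_one_le) (auto simp: dual_ball_def)
  finally show ?thesis .
qed

section \<open>Hahn--Banach extension of dominated linear relations\<close>

definition linear_relation :: "(('w \<Rightarrow> real) \<times> real) set \<Rightarrow> bool" where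
  "linear_relation G \<longleftrightarrow> (\<forall>h a k b s t. (h, a) \<in> G \<longrightarrow> (k, b) \<in> G \<longrightarrow>
      ((\<lambda>w. s * h w + t * k w), s * a + t * b) \<in> G)"

definition dominated_relation ::
    "('w \<Rightarrow> real) set \<Rightarrow> (('w \<Rightarrow> real) \<Rightarrow> real) \<Rightarrow> (('w \<Rightarrow> real) \<times> real) set \<Rightarrow> bool" where
  "dominated_relation X p G \<longleftrightarrow> (\<forall>h a. (h, a) \<in> G \<longrightarrow> h \<in> X \<and> a \<le> p h)"

definition sublinear_on :: "('w \<Rightarrow> real) set \<Rightarrow> (('w \<Rightarrow> real) \<Rightarrow> real) \<Rightarrow> bool" where
  "sublinear_on X p \<longleftrightarrow>
     (\<forall>h\<in>X. \<forall>k\<in>X. \<forall>s t. (\<lambda>w. s * h w + t * k w) \<in> X) \<and>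
     (\<forall>h\<in>X. \<forall>k\<in>X. p (\<lambda>w. h w + k w) \<le> p h + p k) \<and>
     (\<forall>h\<in>X. \<forall>t\<ge>0. p (\<lambda>w. t * h w) = t * p h)"

lemma linear_relationD:
  "linear_relation G \<Longrightarrow> (h, a) \<in> G \<Longrightarrow> (k, b) \<in> G \<Longrightarrow> f = (\<lambda>w. s * h w + t * k w) \<Longrightarrow>
   e = s * a + t * b \<Longrightarrow> (f, e) \<in> G"
  unfolding linear_relation_def by blast

lemma dominated_relationD:
  "dominated_relation X p G \<Longrightarrow> (h, a) \<in> G \<Longrightarrow> h \<in> X \<and> a \<le> p h"
  unfolding dominated_relation_def by blast

definition relation_extend ::
    "(('w \<Rightarrow> real) \<times> real) set \<Rightarrow> ('w \<Rightarrow> real) \<Rightarrow> real \<Rightarrow> (('w \<Rightarrow> real) \<times> real) set" where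
  "relation_extend G h0 c = {((\<lambda>w. h w + t * h0 w), a + t * c) | h a t. (h, a) \<in> G}"

lemma relation_extendI: "(h, a) \<in> G \<Longrightarrow> ((\<lambda>w. h w + t * h0 w), a + t * c) \<in> relation_extend G h0 c"
  unfolding relation_extend_def by blast

lemma subset_relation_extend: "G \<subseteq> relation_extend G h0 c"
proof
  fix x assume "x \<in> G"
  then show "x \<in> relation_extend G h0 c" using relation_extendI[of "fst x" "snd x" G 0] by simp
qed

lemma relation_extend_base:
  assumes "linear_relation G" "G \<noteq> {}"
  shows "(h0, c) \<in> relation_extend G h0 c"
proof -
  obtain k b where kb: "(k, b) \<in> G" using assms(2) by auto
  have "((\<lambda>w. 0), 0) \<in> G" by (rule linear_relationD[OF assms(1) kb kb, of _ 0 0]) auto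
  from relation_extendI[OF this, of 1] show ?thesis by simp
qed

lemma linear_relation_extend:
  assumes "linear_relation G"
  shows "linear_relation (relation_extend G h0 c)"
  unfolding linear_relation_def
proof (intro allI impI)
  fix f a k b s t assume "(f, a) \<in> relation_extend G h0 c" "(k, b) \<in> relation_extend G h0 c"
  then obtain h1 a1 t1 h2 a2 t2 where e: "f = (\<lambda>w. h1 w + t1 * h0 w)" "a = a1 + t1 * c" "(h1, a1) \<in> G"
      "k = (\<lambda>w. h2 w + t2 * h0 w)" "b = a2 + t2 * c" "(h2, a2) \<in> G"
    unfolding relation_extend_def by blast
  have "((\<lambda>w. s * h1 w + t * h2 w), s * a1 + t * a2) \<in> G"
    by (rule linear_relationD[OF assms e(3) e(6)]) auto
  from relation_extendI[OF this, of "s * t1 + t * t2" h0 c] e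
  show "((\<lambda>w. s * f w + t * k w), s * a + t * b) \<in> relation_extend G h0 c"
    by (simp add: algebra_simps)
qed

lemma linear_relation_chain_Union:
  assumes "chain_subset C" "\<And>G. G \<in> C \<Longrightarrow> linear_relation G"
  shows "linear_relation (\<Union>C)"
  unfolding linear_relation_def
proof (intro allI impI)
  fix h a k b s t assume "(h, a) \<in> \<Union>C" "(k, b) \<in> \<Union>C"
  then obtain G G' where GG: "G \<in> C" "G' \<in> C" "(h, a) \<in> G" "(k, b) \<in> G'" by blast
  moreover have "G \<subseteq> G' \<or> G' \<subseteq> G" using assms(1) GG(1,2) unfolding chain_subset_def by blast
  ultimately obtain H where "H \<in> C" "(h, a) \<in> H" "(k, b) \<in> H" by blast
  then show "((\<lambda>w. s * h w + t * k w), s * a + t * b) \<in> \<Union>C"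
    using assms(2) unfolding linear_relation_def by blast
qed

lemma maximal_dominated_relation:
  assumes G0: "linear_relation G0" "dominated_relation X p G0"
  obtains M where "G0 \<subseteq> M" "linear_relation M" "dominated_relation X p M"
    "\<And>G. G0 \<subseteq> G \<Longrightarrow> linear_relation G \<Longrightarrow> dominated_relation X p G \<Longrightarrow> M \<subseteq> G \<Longrightarrow> G = M"
proof -
  define A where "A = {G. G0 \<subseteq> G \<and> linear_relation G \<and> dominated_relation X p G}"
  have "\<exists>M\<in>A. \<forall>G\<in>A. M \<subseteq> G \<longrightarrow> G = M"
  proof (rule Zorn_Lemma2, intro ballI)
    fix C assume C: "C \<in> chains A"
    show "\<exists>U\<in>A. \<forall>G\<in>C. G \<subseteq> U"
    proof (cases "C = {}")
      case True
      then show ?thesis using G0 unfolding A_def by blast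
    next
      case False
      have "C \<subseteq> A" "chain_subset C" using C unfolding chains_def by blast+
      then have "linear_relation (\<Union>C)"
        by (intro linear_relation_chain_Union) (auto simp: A_def)
      moreover have "G0 \<subseteq> \<Union>C" "dominated_relation X p (\<Union>C)"
        using False \<open>C \<subseteq> A\<close> unfolding A_def dominated_relation_def by blast+
      ultimately show ?thesis unfolding A_def by blast
    qed
  qed
  then obtain M where "M \<in> A" and max: "\<And>G. G \<in> A \<Longrightarrow> M \<subseteq> G \<Longrightarrow> G = M" by blast
  show ?thesis
  proof (rule that)
    show "G0 \<subseteq> M" "linear_relation M" "dominated_relation X p M" using \<open>M \<in> A\<close> by (simp_all add: A_def)
    fix G assume "G0 \<subseteq> G" "linear_relation G" "dominated_relation X p G" "M \<subseteq> G"
    then show "G = M" using max by (simp add: A_def)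
  qed
qed

context
  fixes X :: "('w \<Rightarrow> real) set" and p :: "('w \<Rightarrow> real) \<Rightarrow> real"
  assumes sublinear: "sublinear_on X p"
begin

lemma sublinear_lincomb: "h \<in> X \<Longrightarrow> k \<in> X \<Longrightarrow> (\<lambda>w. s * h w + t * k w) \<in> X"
  using sublinear unfolding sublinear_on_def by blast

lemma sublinear_add: "h \<in> X \<Longrightarrow> k \<in> X \<Longrightarrow> p (\<lambda>w. h w + k w) \<le> p h + p k"
  using sublinear unfolding sublinear_on_def by blast

lemma sublinear_scale: "h \<in> X \<Longrightarrow> 0 \<le> t \<Longrightarrow> p (\<lambda>w. t * h w) = t * p h"
  using sublinear unfolding sublinear_on_def by blast

lemma dominated_relation_functional:
  assumes G: "linear_relation G" "dominated_relation X p G" and "(h, a) \<in> G" "(h, b) \<in> G"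
  shows "a = b"
proof -
  have "p (\<lambda>w. 0) = 0"
    using sublinear_scale[of h 0] dominated_relationD[OF G(2) assms(3)] by simp
  moreover have "((\<lambda>w. 0), a - b) \<in> G" "((\<lambda>w. 0), b - a) \<in> G"
    by (rule linear_relationD[OF G(1) assms(3,4), of _ 1 "-1"]; simp)
       (rule linear_relationD[OF G(1) assms(4,3), of _ 1 "-1"]; simp)
  ultimately have "a - b \<le> 0" "b - a \<le> 0" using dominated_relationD[OF G(2)] by fastforce+
  then show ?thesis by simp
qed

lemma extension_value_exists:
  assumes G: "linear_relation G" "dominated_relation X p G" "G \<noteq> {}" and h0: "h0 \<in> X"
  obtains c where "\<And>h a. (h, a) \<in> G \<Longrightarrow> a - p (\<lambda>w. h w - h0 w) \<le> c"
    and "\<And>k b. (k, b) \<in> G \<Longrightarrow> c \<le> p (\<lambda>w. k w + h0 w) - b"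
proof -
  have sep: "a - p (\<lambda>w. h w - h0 w) \<le> p (\<lambda>w. k w + h0 w) - b"
    if hk: "(h, a) \<in> G" "(k, b) \<in> G" for h a k b
  proof -
    have hX: "h \<in> X" and kX: "k \<in> X" using hk dominated_relationD[OF G(2)] by blast+
    have "((\<lambda>w. h w + k w), a + b) \<in> G" by (rule linear_relationD[OF G(1) hk, of _ 1 1]) auto
    then have "a + b \<le> p (\<lambda>w. h w + k w)" using dominated_relationD[OF G(2)] by simp
    also have "(\<lambda>w. h w + k w) = (\<lambda>w. (h w - h0 w) + (k w + h0 w))" by simp
    also have "p \<dots> \<le> p (\<lambda>w. h w - h0 w) + p (\<lambda>w. k w + h0 w)"
      using sublinear_lincomb[OF hX h0, of 1 "-1"] sublinear_lincomb[OF kX h0, of 1 1]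
      by (intro sublinear_add) simp_all
    finally show ?thesis by simp
  qed
  obtain k1 b1 where k1: "(k1, b1) \<in> G" using G(3) by auto
  define c where "c = Sup {a - p (\<lambda>w. h w - h0 w) | h a. (h, a) \<in> G}"
  show ?thesis
  proof
    fix h a assume "(h, a) \<in> G"
    then show "a - p (\<lambda>w. h w - h0 w) \<le> c"
      unfolding c_def using sep[OF _ k1] by (intro cSup_upper bdd_aboveI) blast+
  next
    fix k b assume "(k, b) \<in> G"
    then show "c \<le> p (\<lambda>w. k w + h0 w) - b"
      unfolding c_def using sep k1 by (intro cSup_least) blast+
  qed
qed

lemma dominated_relation_extend:
  assumes G: "linear_relation G" "dominated_relation X p G" and h0: "h0 \<in> X"
    and c_lower: "\<And>h a. (h, a) \<in> G \<Longrightarrow> a - p (\<lambda>w. h w - h0 w) \<le> c"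
    and c_upper: "\<And>k b. (k, b) \<in> G \<Longrightarrow> c \<le> p (\<lambda>w. k w + h0 w) - b"
  shows "dominated_relation X p (relation_extend G h0 c)"
  unfolding dominated_relation_def
proof (intro allI impI)
  fix f e assume "(f, e) \<in> relation_extend G h0 c"
  then obtain h a t where e: "f = (\<lambda>w. h w + t * h0 w)" "e = a + t * c" and ha: "(h, a) \<in> G"
    unfolding relation_extend_def by blast
  have hX: "h \<in> X" and a: "a \<le> p h" using dominated_relationD[OF G(2) ha] by auto
  have scaled: "((\<lambda>w. (1/\<bar>t\<bar>) * h w), a / \<bar>t\<bar>) \<in> G"
    by (rule linear_relationD[OF G(1) ha ha, of _ "1/\<bar>t\<bar>" 0]) auto
  have "e \<le> p f"
  proof (cases t "0::real" rule: linorder_cases)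
    case greater
    have "f = (\<lambda>w. t * ((1/t) * h w + h0 w))" using e greater by (auto simp: algebra_simps)
    then have "p f = t * p (\<lambda>w. (1/t) * h w + h0 w)"
      using sublinear_scale sublinear_lincomb[OF hX h0, of "1/t" 1] greater by simp
    moreover have "c \<le> p (\<lambda>w. (1/t) * h w + h0 w) - a / t"
      using c_upper[OF scaled] greater by simp
    ultimately show ?thesis using e greater by (simp add: field_simps)
  next
    case less
    define u where "u = - t"
    have u: "0 < u" using less by (simp add: u_def)
    have f_eq: "f = (\<lambda>w. u * ((1/u) * h w - h0 w))" using e u by (auto simp: u_def algebra_simps)
    have "p f = u * p (\<lambda>w. (1/u) * h w - h0 w)" unfolding f_eq
      by (rule sublinear_scale) (use sublinear_lincomb[OF hX h0, of "1/u" "-1"] u in simp_all)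
    moreover have "a / u - p (\<lambda>w. (1/u) * h w - h0 w) \<le> c"
      using c_lower[OF scaled] less by (simp add: u_def)
    ultimately show ?thesis using e u by (simp add: u_def field_simps)
  qed (use e a in simp)
  then show "f \<in> X \<and> e \<le> p f" using sublinear_lincomb[OF hX h0, of 1 t] e by simp
qed

theorem hahn_banach_relation:
  assumes G0: "linear_relation G0" "dominated_relation X p G0" "G0 \<noteq> {}"
  obtains \<Lambda> where "\<And>h. h \<in> X \<Longrightarrow> \<Lambda> h \<le> p h"
    and "\<And>h k s t. h \<in> X \<Longrightarrow> k \<in> X \<Longrightarrow> \<Lambda> (\<lambda>w. s * h w + t * k w) = s * \<Lambda> h + t * \<Lambda> k"
    and "\<And>h a. (h, a) \<in> G0 \<Longrightarrow> \<Lambda> h = a"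
proof -
  obtain M where "G0 \<subseteq> M" and M: "linear_relation M" "dominated_relation X p M"
    and M_max: "\<And>G. G0 \<subseteq> G \<Longrightarrow> linear_relation G \<Longrightarrow> dominated_relation X p G \<Longrightarrow> M \<subseteq> G \<Longrightarrow> G = M"
    by (rule maximal_dominated_relation[OF G0(1,2)]) blast
  have "M \<noteq> {}" using \<open>G0 \<subseteq> M\<close> G0(3) by blast
  have total: "\<exists>c. (h, c) \<in> M" if hX: "h \<in> X" for h
  proof -
    obtain c where "\<And>h' a. (h', a) \<in> M \<Longrightarrow> a - p (\<lambda>w. h' w - h w) \<le> c"
      and "\<And>k b. (k, b) \<in> M \<Longrightarrow> c \<le> p (\<lambda>w. k w + h w) - b"
      using extension_value_exists[OF M \<open>M \<noteq> {}\<close> hX] by blast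
    then have "dominated_relation X p (relation_extend M h c)"
      by (rule dominated_relation_extend[OF M hX])
    then have "relation_extend M h c = M"
      by (rule M_max[OF order_trans[OF \<open>G0 \<subseteq> M\<close> subset_relation_extend] linear_relation_extend[OF M(1)]
            _ subset_relation_extend])
    then show ?thesis using relation_extend_base[OF M(1) \<open>M \<noteq> {}\<close>] by auto
  qed
  define \<Lambda> where "\<Lambda> h = (THE a. (h, a) \<in> M)" for h
  have \<Lambda>_eq: "\<Lambda> h = a" if "(h, a) \<in> M" for h a
    unfolding \<Lambda>_def using that dominated_relation_functional[OF M(1,2)] by blast
  have \<Lambda>_M: "(h, \<Lambda> h) \<in> M" if "h \<in> X" for h
    using total[OF that] \<Lambda>_eq by blast
  show ?thesis
  proof
    fix h assume "h \<in> X"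
    then show "\<Lambda> h \<le> p h" using \<Lambda>_M dominated_relationD[OF M(2)] by blast
  next
    fix h k s t assume "h \<in> X" "k \<in> X"
    then have "((\<lambda>w. s * h w + t * k w), s * \<Lambda> h + t * \<Lambda> k) \<in> M"
      by (intro linear_relationD[OF M(1) \<Lambda>_M \<Lambda>_M]) auto
    then show "\<Lambda> (\<lambda>w. s * h w + t * k w) = s * \<Lambda> h + t * \<Lambda> k" by (rule \<Lambda>_eq)
  next
    fix h a assume "(h, a) \<in> G0"
    then show "\<Lambda> h = a" using \<Lambda>_eq \<open>G0 \<subseteq> M\<close> by blast
  qed
qed

end

section \<open>The de Leeuw transform and dominated extensions\<close>

definition bounded_funs :: "('w \<Rightarrow> real) set" where
  "bounded_funs = {h. \<exists>B. \<forall>w. \<bar>h w\<bar> \<le> B}"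

definition fsup :: "('w \<Rightarrow> real) \<Rightarrow> real" where
  "fsup h = Sup (range h)"

definition de_leeuw :: "('a::metric_space \<Rightarrow> real) \<Rightarrow> 'a \<times> 'a \<Rightarrow> real" where
  "de_leeuw f = (\<lambda>(p, q). (f p - f q) / dist p q)"

lemma bounded_funsI: "(\<And>w. \<bar>h w\<bar> \<le> B) \<Longrightarrow> h \<in> bounded_funs"
  unfolding bounded_funs_def by blast

lemma bounded_funs_lincomb:
  assumes "h \<in> bounded_funs" "k \<in> bounded_funs"
  shows "(\<lambda>w. s * h w + t * k w) \<in> bounded_funs"
proof -
  obtain B1 B2 where B: "\<And>w. \<bar>h w\<bar> \<le> B1" "\<And>w. \<bar>k w\<bar> \<le> B2"
    using assms unfolding bounded_funs_def by blast
  have "\<bar>s * h w + t * k w\<bar> \<le> \<bar>s\<bar> * B1 + \<bar>t\<bar> * B2" for w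
    by (rule order_trans[OF abs_lincomb_le add_mono]) (simp_all add: mult_left_mono B)
  then show ?thesis by (rule bounded_funsI)
qed

lemma indicator_bounded_funs: "(\<lambda>w. c * indicator S w) \<in> bounded_funs"
  by (rule bounded_funsI[where B="\<bar>c\<bar>"]) (simp add: indicator_def)

lemma indicator_in_bounded_funs: "indicator S \<in> bounded_funs"
  using indicator_bounded_funs[of 1 S] by simp

lemma const_bounded_funs: "(\<lambda>w. c) \<in> bounded_funs"
  by (rule bounded_funsI[where B="\<bar>c\<bar>"]) simp

lemma fsup_upper: "h \<in> bounded_funs \<Longrightarrow> h w \<le> fsup h"
  unfolding fsup_def bounded_funs_def
  by (rule cSup_upper) (auto intro: bdd_aboveI2 simp: abs_le_iff)

lemma fsup_least: "(\<And>w. h w \<le> C) \<Longrightarrow> fsup h \<le> C"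
  unfolding fsup_def by (rule cSup_least) auto

lemma sublinear_fsup: "sublinear_on bounded_funs fsup"
  unfolding sublinear_on_def
proof (intro conjI ballI allI impI)
  fix h k :: "'w \<Rightarrow> real" assume h: "h \<in> bounded_funs" and "k \<in> bounded_funs"
  then show "fsup (\<lambda>w. h w + k w) \<le> fsup h + fsup k"
    by (intro fsup_least add_mono fsup_upper)
  fix t :: real assume t: "0 \<le> t"
  show "fsup (\<lambda>w. t * h w) = t * fsup h"
  proof (cases "t = 0")
    case False
    then have "0 < t" using t by simp
    have "(\<lambda>w. t * h w) \<in> bounded_funs" using bounded_funs_lincomb[OF h h, of t 0] by simp
    then have "fsup h \<le> fsup (\<lambda>w. t * h w) / t"
      using \<open>0 < t\<close> fsup_upper by (intro fsup_least) (simp add: pos_le_divide_eq mult.commute)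
    moreover have "fsup (\<lambda>w. t * h w) \<le> t * fsup h"
      using fsup_upper[OF h] t by (intro fsup_least mult_left_mono)
    ultimately show ?thesis using \<open>0 < t\<close> by (simp add: pos_le_divide_eq mult.commute)
  qed (simp add: fsup_def)
qed (rule bounded_funs_lincomb)

lemma abs_de_leeuw_le: "f \<in> lip0 z \<Longrightarrow> \<bar>de_leeuw f w\<bar> \<le> lipnorm f"
  using abs_diff_le_lipnorm[of f z "fst w" "snd w"]
  by (cases w) (auto simp: de_leeuw_def divide_le_eq lipnorm_nonneg)

lemma de_leeuw_bounded_funs: "f \<in> lip0 z \<Longrightarrow> de_leeuw f \<in> bounded_funs"
  by (rule bounded_funsI[OF abs_de_leeuw_le])

lemma de_leeuw_lincomb: "de_leeuw (\<lambda>x. a * f x + b * g x) = (\<lambda>w. a * de_leeuw f w + b * de_leeuw g w)"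
  by (auto simp: de_leeuw_def fun_eq_iff diff_divide_distrib add_divide_distrib algebra_simps)

lemma lipnorm_le_fsup_de_leeuw:
  assumes "f \<in> lip0 z"
  shows "lipnorm f \<le> fsup (de_leeuw f)"
proof (rule lipnorm_leI)
  have "0 = de_leeuw f (z, z)" by (simp add: de_leeuw_def)
  then show "0 \<le> fsup (de_leeuw f)" using fsup_upper[OF de_leeuw_bounded_funs[OF assms]] by metis
  fix x y :: 'a assume "x \<noteq> y"
  have "\<bar>f x - f y\<bar> / dist x y \<le> fsup (de_leeuw f)"
  proof (cases "f y \<le> f x")
    case True
    then show ?thesis using fsup_upper[OF de_leeuw_bounded_funs[OF assms], of "(x, y)"]
      by (simp add: de_leeuw_def)
  next
    case False
    then show ?thesis using fsup_upper[OF de_leeuw_bounded_funs[OF assms], of "(y, x)"]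
      by (simp add: de_leeuw_def dist_commute)
  qed
  then show "\<bar>f x - f y\<bar> \<le> fsup (de_leeuw f) * dist x y"
    using \<open>x \<noteq> y\<close> by (simp add: pos_divide_le_eq)
qed

definition dominated_extension ::
    "'a::metric_space \<Rightarrow> (('a \<Rightarrow> real) \<Rightarrow> real) \<Rightarrow> (('a \<times> 'a \<Rightarrow> real) \<Rightarrow> real) \<Rightarrow> bool" where
  "dominated_extension z \<mu> \<Lambda> \<longleftrightarrow> (\<forall>h\<in>bounded_funs. \<Lambda> h \<le> fsup h) \<and>
     (\<forall>h\<in>bounded_funs. \<forall>k\<in>bounded_funs. \<forall>s t. \<Lambda> (\<lambda>w. s * h w + t * k w) = s * \<Lambda> h + t * \<Lambda> k) \<and>
     (\<forall>f\<in>lip0 z. \<Lambda> (de_leeuw f) = \<mu> f)"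

lemma dominated_extension_exists:
  assumes \<mu>: "\<mu> \<in> lipdual z"
    and bound: "\<And>f t. f \<in> lip0 z \<Longrightarrow> \<mu> f + t * v \<le> fsup (\<lambda>w. de_leeuw f w + t * indicator S w)"
  obtains \<Lambda> where "dominated_extension z \<mu> \<Lambda>" "\<Lambda> (indicator S) = v"
proof -
  define G where "G = {((\<lambda>w. de_leeuw f w + t * indicator S w), \<mu> f + t * v) | f t. f \<in> lip0 z}"
  have in_bounded: "(\<lambda>w. de_leeuw f w + t * indicator S w) \<in> bounded_funs" if "f \<in> lip0 z" for f t
    using bounded_funs_lincomb[OF de_leeuw_bounded_funs[OF that] indicator_bounded_funs, of 1 _ 1]
    by simp
  have G_lin: "linear_relation G"
    unfolding linear_relation_def
  proof (intro allI impI)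
    fix h a k b s t
    assume "(h, a) \<in> G" "(k, b) \<in> G"
    then obtain f g t1 t2 where fg: "h = (\<lambda>w. de_leeuw f w + t1 * indicator S w)" "a = \<mu> f + t1 * v"
        "k = (\<lambda>w. de_leeuw g w + t2 * indicator S w)" "b = \<mu> g + t2 * v" "f \<in> lip0 z" "g \<in> lip0 z"
      unfolding G_def by blast
    have "(\<lambda>w. s * h w + t * k w) =
        (\<lambda>w. de_leeuw (\<lambda>x. s * f x + t * g x) w + (s * t1 + t * t2) * indicator S w)"
      using fg by (simp add: de_leeuw_lincomb fun_eq_iff algebra_simps)
    moreover have "s * a + t * b = \<mu> (\<lambda>x. s * f x + t * g x) + (s * t1 + t * t2) * v"
      using fg lipdual_lincomb[OF \<mu> fg(5,6)] by (simp add: algebra_simps)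
    ultimately show "(\<lambda>w. s * h w + t * k w, s * a + t * b) \<in> G"
      unfolding G_def using lip0_lincomb[OF fg(5,6)] by blast
  qed
  have G_dom: "dominated_relation bounded_funs fsup G"
    unfolding dominated_relation_def G_def using in_bounded bound by blast
  have G_ne: "G \<noteq> {}" unfolding G_def using lip0_zero_fun by blast
  obtain \<Lambda> where \<Lambda>: "\<And>h. h \<in> bounded_funs \<Longrightarrow> \<Lambda> h \<le> fsup h"
    "\<And>h k s t. h \<in> bounded_funs \<Longrightarrow> k \<in> bounded_funs \<Longrightarrow> \<Lambda> (\<lambda>w. s * h w + t * k w) = s * \<Lambda> h + t * \<Lambda> k"
    and on_G: "\<And>h a. (h, a) \<in> G \<Longrightarrow> \<Lambda> h = a"
    using hahn_banach_relation[OF sublinear_fsup G_lin G_dom G_ne] by blast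
  have "\<Lambda> (de_leeuw f) = \<mu> f" if "f \<in> lip0 z" for f
    using on_G[of _ "\<mu> f + 0 * v"] that unfolding G_def by force
  then have "dominated_extension z \<mu> \<Lambda>" unfolding dominated_extension_def using \<Lambda> by blast
  moreover have "\<Lambda> (indicator S) = v"
    using on_G[of _ "\<mu> (\<lambda>x. 0) + 1 * v"] lipdual_zero_fun[OF \<mu>] lip0_zero_fun[of z]
    unfolding G_def by (force simp: de_leeuw_def)
  ultimately show ?thesis using that by blast
qed

lemma dual_ball_dominated_extension:
  assumes "\<mu> \<in> dual_ball z"
  obtains \<Lambda> where "dominated_extension z \<mu> \<Lambda>"
proof (rule dominated_extension_exists[where S="{}" and v=0])
  show "\<mu> \<in> lipdual z" using assms by (simp add: dual_ball_def)
  fix f and t :: real assume "f \<in> lip0 z"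
  then show "\<mu> f + t * 0 \<le> fsup (\<lambda>w. de_leeuw f w + t * indicator {} w)"
    using dual_ball_le_lipnorm[OF assms] lipnorm_le_fsup_de_leeuw[of f z] by fastforce
qed

context
  fixes z :: "'a::metric_space" and \<mu> \<Lambda>
  assumes ext: "dominated_extension z \<mu> \<Lambda>"
begin

lemma ext_le_fsup: "h \<in> bounded_funs \<Longrightarrow> \<Lambda> h \<le> fsup h"
  using ext unfolding dominated_extension_def by blast

lemma ext_lincomb:
  "h \<in> bounded_funs \<Longrightarrow> k \<in> bounded_funs \<Longrightarrow> \<Lambda> (\<lambda>w. s * h w + t * k w) = s * \<Lambda> h + t * \<Lambda> k"
  using ext unfolding dominated_extension_def by blast

lemma ext_de_leeuw: "f \<in> lip0 z \<Longrightarrow> \<Lambda> (de_leeuw f) = \<mu> f"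
  using ext unfolding dominated_extension_def by blast

lemma ext_scale: "h \<in> bounded_funs \<Longrightarrow> \<Lambda> (\<lambda>w. s * h w) = s * \<Lambda> h"
  using ext_lincomb[of h h s 0] by simp

lemma ext_add: "h \<in> bounded_funs \<Longrightarrow> k \<in> bounded_funs \<Longrightarrow> \<Lambda> (\<lambda>w. h w + k w) = \<Lambda> h + \<Lambda> k"
  using ext_lincomb[of h k 1 1] by simp

lemma ext_zero: "\<Lambda> (\<lambda>w. 0) = 0"
  using ext_scale[OF const_bounded_funs, of 0 0] by simp

lemma ext_mono:
  assumes "h \<in> bounded_funs" "k \<in> bounded_funs" "\<And>w. h w \<le> k w"
  shows "\<Lambda> h \<le> \<Lambda> k"
proof -
  have "\<Lambda> h - \<Lambda> k = \<Lambda> (\<lambda>w. h w - k w)" using ext_lincomb[OF assms(1,2), of 1 "-1"] by simp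
  also have "\<dots> \<le> fsup (\<lambda>w. h w - k w)"
    using bounded_funs_lincomb[OF assms(1,2), of 1 "-1"] by (intro ext_le_fsup) simp
  also have "\<dots> \<le> 0" by (rule fsup_least) (use assms(3) in simp)
  finally show ?thesis by simp
qed

lemma ext_indicator_nonneg: "0 \<le> \<Lambda> (indicator S)"
  using ext_mono[OF const_bounded_funs indicator_bounded_funs[of 1], of 0 S] ext_zero by simp

lemma ext_indicator_compl: "\<Lambda> (indicator S) + \<Lambda> (indicator (- S)) = 1"
proof -
  have "fsup (\<lambda>w::'a \<times> 'a. 1::real) \<le> 1" "fsup (\<lambda>w::'a \<times> 'a. -1::real) \<le> -1"
    by (simp_all add: fsup_least)
  then have "\<Lambda> (\<lambda>w. 1) = 1"
    using ext_le_fsup[OF const_bounded_funs, of 1] ext_le_fsup[OF const_bounded_funs, of "-1"]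
      ext_scale[OF const_bounded_funs, of "-1" 1]
    by simp
  moreover have "(\<lambda>w. indicator S w + indicator (- S) w) = (\<lambda>w. 1::real)"
    by (auto simp: indicator_def fun_eq_iff)
  ultimately show ?thesis
    using ext_add[OF indicator_bounded_funs[of 1] indicator_bounded_funs[of 1], of S "- S"] by simp
qed

lemma ext_indicator_le_1: "\<Lambda> (indicator S) \<le> 1"
  using ext_indicator_compl[of S] ext_indicator_nonneg[of "- S"] by simp

lemma ext_abs_le:
  assumes "h \<in> bounded_funs" "\<And>w. \<bar>h w\<bar> \<le> L * indicator S w"
  shows "\<bar>\<Lambda> h\<bar> \<le> L * \<Lambda> (indicator S)"
proof -
  have "\<Lambda> h \<le> \<Lambda> (\<lambda>w. L * indicator S w)"
    using assms(2) by (intro ext_mono[OF assms(1) indicator_bounded_funs]) (simp add: abs_le_iff)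
  moreover have "\<Lambda> (\<lambda>w. (- L) * indicator S w) \<le> \<Lambda> h"
    using assms(2) by (intro ext_mono[OF indicator_bounded_funs assms(1)]) (smt (verit) mult_minus_left)
  ultimately show ?thesis
    using ext_scale[OF indicator_bounded_funs[of 1], of L S] ext_scale[OF indicator_bounded_funs[of 1], of "- L" S]
    by (simp add: abs_le_iff)
qed

end

section \<open>Splitting extreme points\<close>

lemma perturbed_split_in_dual_ball:
  assumes A: "A \<in> lipdual z" and B: "B \<in> lipdual z"
    and bA: "\<And>f. f \<in> lip0 z \<Longrightarrow> \<bar>A f\<bar> \<le> \<alpha> * lipnorm f"
    and bB: "\<And>f. f \<in> lip0 z \<Longrightarrow> \<bar>B f\<bar> \<le> (1 - \<alpha>) * lipnorm f"
    and e: "0 \<le> 1 + e1" "0 \<le> 1 + e2" "e1 * \<alpha> + e2 * (1 - \<alpha>) = 0"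
  shows "(\<lambda>f. (1 + e1) * A f + (1 + e2) * B f) \<in> dual_ball z"
  unfolding dual_ball_def
proof (intro CollectI conjI dualnorm_leI)
  show "(\<lambda>f. (1 + e1) * A f + (1 + e2) * B f) \<in> lipdual z" by (rule lipdual_lincomb_fun[OF A B])
  fix g assume g: "g \<in> lip0 z"
  have "\<bar>(1 + e1) * A g + (1 + e2) * B g\<bar> \<le> \<bar>1 + e1\<bar> * \<bar>A g\<bar> + \<bar>1 + e2\<bar> * \<bar>B g\<bar>"
    by (rule abs_lincomb_le)
  also have "\<dots> \<le> (1 + e1) * (\<alpha> * lipnorm g) + (1 + e2) * ((1 - \<alpha>) * lipnorm g)"
    using e by (intro add_mono mult_mono bA bB g) auto
  also have "\<dots> = (1 + (e1 * \<alpha> + e2 * (1 - \<alpha>))) * lipnorm g" by (simp add: algebra_simps)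
  finally show "\<bar>(1 + e1) * A g + (1 + e2) * B g\<bar> \<le> 1 * lipnorm g" using e by simp
qed simp

lemma extreme_point_split:
  assumes ext: "extreme_pt (dual_ball z) \<mu>"
    and A: "A \<in> lipdual z" and B: "B \<in> lipdual z" and sum: "\<And>f. \<mu> f = A f + B f"
    and \<alpha>: "0 \<le> \<alpha>" "\<alpha> \<le> 1"
    and bA: "\<And>f. f \<in> lip0 z \<Longrightarrow> \<bar>A f\<bar> \<le> \<alpha> * lipnorm f"
    and bB: "\<And>f. f \<in> lip0 z \<Longrightarrow> \<bar>B f\<bar> \<le> (1 - \<alpha>) * lipnorm f"
  shows "A f = \<alpha> * \<mu> f"
proof (cases "f \<in> lip0 z \<and> 0 < \<alpha> \<and> \<alpha> < 1")
  case False
  then consider "f \<notin> lip0 z" | "\<alpha> = 0" | "\<alpha> = 1" using \<alpha> by linarith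
  then show ?thesis
    by cases (use lipdual_outside[OF A] lipdual_outside[OF B] sum[of f] bA[of f] bB[of f] in auto)
next
  case True
  define s where "s = min \<alpha> (1 - \<alpha>)"
  define c1 where "c1 = s / \<alpha>"
  define c2 where "c2 = s / (1 - \<alpha>)"
  have c: "0 < s" "0 < c1" "c1 \<le> 1" "c1 * \<alpha> = s" "0 < c2" "c2 \<le> 1" "c2 * (1 - \<alpha>) = s"
    using True unfolding s_def c1_def c2_def by (auto simp: field_simps min_def)
  define a where "a = (\<lambda>f. (1 + c1) * A f + (1 + - c2) * B f)"
  define b where "b = (\<lambda>f. (1 + - c1) * A f + (1 + c2) * B f)"
  have "a \<in> dual_ball z" "b \<in> dual_ball z"
    unfolding a_def b_def using c
    by (intro perturbed_split_in_dual_ball[OF A B bA bB]; simp add: algebra_simps)+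
  moreover have "\<mu> = (\<lambda>f. (a f + b f) / 2)"
    by (simp add: a_def b_def fun_eq_iff sum algebra_simps)
  ultimately have "a = b" using ext unfolding extreme_pt_def by blast
  then have "c1 * A f = c2 * B f" by (simp add: a_def b_def fun_eq_iff algebra_simps)
  then have "s * ((1 - \<alpha>) * A f) = s * (\<alpha> * B f)"
    using c by (metis mult.assoc mult.commute)
  then have "(1 - \<alpha>) * A f = \<alpha> * B f" using c by simp
  then show ?thesis using sum[of f] by (simp add: algebra_simps)
qed

definition ext_part ::
    "'a::metric_space \<Rightarrow> (('a \<times> 'a \<Rightarrow> real) \<Rightarrow> real) \<Rightarrow> ('a \<times> 'a) set \<Rightarrow> ('a \<Rightarrow> real) \<Rightarrow> real" where
  "ext_part z \<Lambda> S = (\<lambda>f. if f \<in> lip0 z then \<Lambda> (\<lambda>w. de_leeuw f w * indicator S w) else 0)"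

lemma de_leeuw_restrict_bounded_funs:
  "f \<in> lip0 z \<Longrightarrow> (\<lambda>w. de_leeuw f w * indicator S w) \<in> bounded_funs"
  by (rule bounded_funsI[where B="lipnorm f"])
     (use abs_de_leeuw_le in \<open>auto simp: indicator_def lipnorm_nonneg\<close>)

context
  fixes z :: "'a::metric_space" and \<mu> \<Lambda>
  assumes ext: "dominated_extension z \<mu> \<Lambda>" and \<mu>: "\<mu> \<in> lipdual z"
begin

lemma ext_part_bound: "f \<in> lip0 z \<Longrightarrow> \<bar>ext_part z \<Lambda> S f\<bar> \<le> \<Lambda> (indicator S) * lipnorm f"
  using ext_abs_le[OF ext de_leeuw_restrict_bounded_funs, of f z S "lipnorm f"] abs_de_leeuw_le[of f z]
  by (auto simp: ext_part_def indicator_def mult.commute)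

lemma ext_part_lipdual: "ext_part z \<Lambda> S \<in> lipdual z"
proof (rule lipdualI[OF _ ext_part_bound])
  fix f g :: "'a \<Rightarrow> real" and a b :: real assume fg: "f \<in> lip0 z" "g \<in> lip0 z"
  have "(\<lambda>w. de_leeuw (\<lambda>x. a * f x + b * g x) w * indicator S w) =
        (\<lambda>w. a * (de_leeuw f w * indicator S w) + b * (de_leeuw g w * indicator S w))"
    by (simp add: de_leeuw_lincomb algebra_simps)
  then show "ext_part z \<Lambda> S (\<lambda>x. a * f x + b * g x) = a * ext_part z \<Lambda> S f + b * ext_part z \<Lambda> S g"
    using fg lip0_lincomb[OF fg]
      ext_lincomb[OF ext de_leeuw_restrict_bounded_funs[OF fg(1)] de_leeuw_restrict_bounded_funs[OF fg(2)]]
    by (simp add: ext_part_def)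
next
  fix f :: "'a \<Rightarrow> real" assume "f \<notin> lip0 z"
  then show "ext_part z \<Lambda> S f = 0" by (simp add: ext_part_def)
qed

lemma ext_part_sum: "\<mu> f = ext_part z \<Lambda> S f + ext_part z \<Lambda> (- S) f"
proof (cases "f \<in> lip0 z")
  case True
  have "de_leeuw f = (\<lambda>w. de_leeuw f w * indicator S w + de_leeuw f w * indicator (- S) w)"
    by (auto simp: indicator_def fun_eq_iff)
  then have "\<mu> f = \<Lambda> (\<lambda>w. de_leeuw f w * indicator S w + de_leeuw f w * indicator (- S) w)"
    using ext_de_leeuw[OF ext True] by metis
  then show ?thesis
    using True ext_add[OF ext de_leeuw_restrict_bounded_funs[OF True] de_leeuw_restrict_bounded_funs[OF True]]
    by (simp add: ext_part_def)
qed (simp add: lipdual_outside[OF \<mu>] ext_part_def)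

lemma extreme_point_ext_part:
  assumes "extreme_pt (dual_ball z) \<mu>"
  shows "ext_part z \<Lambda> S f = \<Lambda> (indicator S) * \<mu> f"
proof (rule extreme_point_split[OF assms ext_part_lipdual ext_part_lipdual ext_part_sum])
  show "0 \<le> \<Lambda> (indicator S)" "\<Lambda> (indicator S) \<le> 1"
    by (rule ext_indicator_nonneg[OF ext], rule ext_indicator_le_1[OF ext])
  show "\<bar>ext_part z \<Lambda> (- S) f\<bar> \<le> (1 - \<Lambda> (indicator S)) * lipnorm f" if "f \<in> lip0 z" for f
    using ext_part_bound[OF that, of "- S"] ext_indicator_compl[OF ext, of S]
    by (metis add_diff_cancel_left')
qed (rule ext_part_bound)

end

section \<open>Point bumps and molecules\<close>

lemma uniformly_discreteE:
  assumes "uniformly_discrete TYPE('a::metric_space)"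
  obtains \<theta> where "0 < \<theta>" "\<And>u v::'a. u \<noteq> v \<Longrightarrow> \<theta> \<le> dist u v"
proof -
  from assms obtain \<theta> where "0 < \<theta>" "\<forall>u v::'a. u \<noteq> v \<longrightarrow> \<theta> \<le> dist u v"
    unfolding uniformly_discrete_def by blast
  then show ?thesis using that by blast
qed

lemma bounded_lip0:
  fixes g :: "'a::metric_space \<Rightarrow> real"
  assumes \<theta>: "0 < \<theta>" "\<And>u v::'a. u \<noteq> v \<Longrightarrow> \<theta> \<le> dist u v"
    and K: "\<And>x. \<bar>g x\<bar> \<le> K" and "g z = 0"
  shows "g \<in> lip0 z" "lipnorm g \<le> 2 * K / \<theta>"
proof -
  have "0 \<le> K" using K[of z] by simp
  have L: "\<bar>g x - g y\<bar> \<le> 2 * K / \<theta> * dist x y" for x y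
  proof (cases "x = y")
    case False
    have "\<bar>g x - g y\<bar> \<le> 2 * K" using K[of x] K[of y] by (simp add: abs_le_iff)
    also have "\<dots> \<le> 2 * K / \<theta> * dist x y"
      using \<theta>(2)[OF False] \<theta>(1) \<open>0 \<le> K\<close> by (simp add: field_simps mult_left_mono)
    finally show ?thesis .
  qed simp
  show "g \<in> lip0 z" by (rule lip0I[OF \<open>g z = 0\<close> L])
  show "lipnorm g \<le> 2 * K / \<theta>" by (rule lipnorm_leI[OF L]) (use \<open>0 \<le> K\<close> \<theta> in simp)
qed

definition pairs_through :: "'a \<Rightarrow> ('a \<times> 'a) set" where
  "pairs_through r = {(p, q). p = r \<or> q = r}"

text \<open>For \<open>r \<noteq> z\<close> this is the indicator of \<open>r\<close>; the indicator of the origin itself does not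
  vanish at \<open>z\<close>, so it is replaced by its complement, whose de Leeuw transform is also
  supported on the pairs through \<open>z\<close>.\<close>

definition point_bump :: "'a \<Rightarrow> 'a \<Rightarrow> 'a \<Rightarrow> real" where
  "point_bump z r = (if r = z then indicator (- {z}) else indicator {r})"

lemma point_bump_lip0:
  assumes "uniformly_discrete TYPE('a::metric_space)"
  shows "point_bump z (r::'a) \<in> lip0 z"
proof -
  obtain \<theta> where "0 < \<theta>" "\<And>u v::'a. u \<noteq> v \<Longrightarrow> \<theta> \<le> dist u v"
    using uniformly_discreteE[OF assms] by blast
  then show ?thesis by (rule bounded_lip0(1)[where K=1]) (auto simp: point_bump_def)
qed

lemma de_leeuw_point_bump: "w \<notin> pairs_through r \<Longrightarrow> de_leeuw (point_bump z r) w = 0"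
  by (cases w) (auto simp: de_leeuw_def point_bump_def pairs_through_def)

definition molecule :: "'a::metric_space \<Rightarrow> 'a \<Rightarrow> 'a \<Rightarrow> ('a \<Rightarrow> real) \<Rightarrow> real" where
  "molecule z x y = (\<lambda>f. if f \<in> lip0 z then (f x - f y) / dist x y else 0)"

lemma abs_molecule_le: "f \<in> lip0 z \<Longrightarrow> \<bar>molecule z x y f\<bar> \<le> lipnorm f"
  using abs_de_leeuw_le[of f z "(x, y)"] by (simp add: molecule_def de_leeuw_def)

lemma molecule_lipdual: "molecule z x y \<in> lipdual z"
proof (rule lipdualI[where C=1])
  fix f g :: "'a \<Rightarrow> real" and a b :: real assume "f \<in> lip0 z" "g \<in> lip0 z"
  then show "molecule z x y (\<lambda>x. a * f x + b * g x) = a * molecule z x y f + b * molecule z x y g"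
    using lip0_lincomb[of f z g a b]
    by (simp add: molecule_def diff_divide_distrib add_divide_distrib algebra_simps)
next
  fix f :: "'a \<Rightarrow> real"
  show "f \<in> lip0 z \<Longrightarrow> \<bar>molecule z x y f\<bar> \<le> 1 * lipnorm f" using abs_molecule_le by simp
  show "f \<notin> lip0 z \<Longrightarrow> molecule z x y f = 0" by (simp add: molecule_def)
qed

lemma molecule_dual_ball: "molecule z x y \<in> dual_ball z"
proof -
  have "dualnorm z (molecule z x y) \<le> 1" by (rule dualnorm_leI) (simp_all add: abs_molecule_le)
  then show ?thesis using molecule_lipdual by (simp add: dual_ball_def)
qed

lemma molecule_swap: "molecule z y x = (\<lambda>f. - molecule z x y f)"
  by (simp add: fun_eq_iff molecule_def dist_commute minus_divide_left)

lemma dist_lip0: "(\<lambda>p. dist p s - dist z s) \<in> lip0 z"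
proof (rule lip0I[where L=1])
  fix x y :: 'a
  show "\<bar>(dist x s - dist z s) - (dist y s - dist z s)\<bar> \<le> 1 * dist x y"
    using dist_triangle[of x s y] dist_triangle[of y s x] dist_commute[of x y] by (simp add: abs_le_iff)
qed simp

lemma molecule_dist: "x \<noteq> y \<Longrightarrow> molecule z x y (\<lambda>p. dist p y - dist z y) = 1"
  using dist_lip0[of y z] by (simp add: molecule_def)

context
  fixes z :: "'a::metric_space" and \<mu> \<Lambda>
  assumes ext: "dominated_extension z \<mu> \<Lambda>" and \<mu>: "\<mu> \<in> lipdual z"
    and extreme: "extreme_pt (dual_ball z) \<mu>" and discrete: "uniformly_discrete TYPE('a)"
begin

lemma ext_concentrated_at_point:
  assumes "\<mu> (point_bump z r) \<noteq> 0"
  shows "\<Lambda> (indicator (- pairs_through r)) = 0"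
proof -
  have "(\<lambda>w. de_leeuw (point_bump z r) w * indicator (- pairs_through r) w) = (\<lambda>w. 0)"
    by (auto simp: fun_eq_iff indicator_def de_leeuw_point_bump)
  then have "ext_part z \<Lambda> (- pairs_through r) (point_bump z r) = 0"
    using point_bump_lip0[OF discrete] ext_zero[OF ext] by (simp add: ext_part_def)
  then show ?thesis using extreme_point_ext_part[OF ext \<mu> extreme] assms by simp
qed

lemma ext_concentrated_multiple_of_molecule:
  assumes "r \<noteq> s" "\<mu> (point_bump z r) \<noteq> 0" "\<mu> (point_bump z s) \<noteq> 0"
  obtains c where "\<bar>c\<bar> \<le> 1" "\<And>f. \<mu> f = c * molecule z r s f"
proof -
  define T where "T = pairs_through r \<inter> pairs_through s"
  have sum_bounded: "(\<lambda>w. 1 * indicator (- pairs_through r) w + 1 * indicator (- pairs_through s) w) \<in> bounded_funs"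
    by (intro bounded_funs_lincomb indicator_in_bounded_funs)
  have "\<Lambda> (indicator (- T)) \<le> \<Lambda> (\<lambda>w. 1 * indicator (- pairs_through r) w + 1 * indicator (- pairs_through s) w)"
    by (rule ext_mono[OF ext indicator_in_bounded_funs sum_bounded])
       (auto simp: indicator_def T_def)
  also have "\<dots> = 0"
    using ext_concentrated_at_point[OF assms(2)] ext_concentrated_at_point[OF assms(3)]
      ext_lincomb[OF ext indicator_in_bounded_funs indicator_in_bounded_funs,
        of 1 "- pairs_through r" 1 "- pairs_through s"]
    by simp
  finally have T: "\<Lambda> (indicator (- T)) = 0" using ext_indicator_nonneg[OF ext, of "- T"] by simp
  define c where "c = \<Lambda> (indicator {(r, s)}) - \<Lambda> (indicator {(s, r)})"
  have "\<bar>c\<bar> \<le> 1" unfolding c_def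
    using ext_indicator_nonneg[OF ext, of "{(r, s)}"] ext_indicator_le_1[OF ext, of "{(r, s)}"]
      ext_indicator_nonneg[OF ext, of "{(s, r)}"] ext_indicator_le_1[OF ext, of "{(s, r)}"]
    by (simp add: abs_le_iff)
  moreover have "\<mu> f = c * molecule z r s f" for f
  proof (cases "f \<in> lip0 z")
    case True
    have split: "(\<lambda>w. de_leeuw f w * indicator T w) =
        (\<lambda>w. de_leeuw f (r, s) * indicator {(r, s)} w + (- de_leeuw f (r, s)) * indicator {(s, r)} w)"
    proof
      fix w :: "'a \<times> 'a"
      show "de_leeuw f w * indicator T w =
          de_leeuw f (r, s) * indicator {(r, s)} w + (- de_leeuw f (r, s)) * indicator {(s, r)} w"
        using assms(1) by (cases w)
          (auto simp: T_def pairs_through_def indicator_def de_leeuw_def dist_commute minus_divide_left)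
    qed
    have "ext_part z \<Lambda> T f = \<Lambda> (\<lambda>w. de_leeuw f w * indicator T w)"
      using True by (simp add: ext_part_def)
    also have "\<dots> = de_leeuw f (r, s) * \<Lambda> (indicator {(r, s)}) + (- de_leeuw f (r, s)) * \<Lambda> (indicator {(s, r)})"
      unfolding split by (rule ext_lincomb[OF ext indicator_in_bounded_funs indicator_in_bounded_funs])
    finally have "ext_part z \<Lambda> T f = de_leeuw f (r, s) * c" by (simp add: c_def algebra_simps)
    moreover have "ext_part z \<Lambda> (- T) f = 0" using extreme_point_ext_part[OF ext \<mu> extreme] T by simp
    ultimately show ?thesis
      using ext_part_sum[OF ext \<mu>, of f T] True by (simp add: molecule_def de_leeuw_def)
  qed (simp add: lipdual_outside[OF \<mu>] molecule_def)
  ultimately show ?thesis using that by blast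
qed

end

lemma extreme_multiple_of_molecule:
  assumes extreme: "extreme_pt (dual_ball z) \<mu>" and "x \<noteq> y"
    and c: "\<bar>c\<bar> \<le> 1" and \<mu>: "\<And>f. \<mu> f = c * molecule z x y f"
  shows "\<mu> = molecule z x y \<or> \<mu> = molecule z y x"
proof -
  define \<alpha> where "\<alpha> = (1 + c) / 2"
  have \<alpha>: "0 \<le> \<alpha>" "\<alpha> \<le> 1" using c unfolding \<alpha>_def by auto
  have "\<alpha> * molecule z x y f = \<alpha> * \<mu> f" for f
  proof (rule extreme_point_split[OF extreme, where B="\<lambda>f. (1 - \<alpha>) * molecule z y x f"])
    show "\<mu> f = \<alpha> * molecule z x y f + (1 - \<alpha>) * molecule z y x f" for f
      using \<mu> unfolding molecule_swap[of z x y] \<alpha>_def by (simp add: field_simps)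
    show "\<bar>\<alpha> * molecule z x y f\<bar> \<le> \<alpha> * lipnorm f"
      and "\<bar>(1 - \<alpha>) * molecule z y x f\<bar> \<le> (1 - \<alpha>) * lipnorm f" if "f \<in> lip0 z" for f
      using mult_left_mono[OF abs_molecule_le[OF that], of \<alpha>]
        mult_left_mono[OF abs_molecule_le[OF that], of "1 - \<alpha>"] \<alpha>
      by (simp_all add: abs_mult)
  qed (use \<alpha> in \<open>simp_all add: molecule_lipdual lipdual_scale_fun\<close>)
  from this[of "\<lambda>p. dist p y - dist z y"] have "\<alpha> = \<alpha> * c"
    using \<mu> molecule_dist[OF \<open>x \<noteq> y\<close>, of z] by simp
  then have "(1 + c) * (1 - c) = 0" unfolding \<alpha>_def by (simp add: algebra_simps)
  then have "c = 1 \<or> c = -1" by auto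
  then show ?thesis using \<mu> by (auto simp: fun_eq_iff molecule_swap[of z x y])
qed

section \<open>The free space of a uniformly discrete space\<close>

lemma eq_0_if_abs_le_eps_mult:
  fixes x C :: real
  assumes "\<And>\<epsilon>. 0 < \<epsilon> \<Longrightarrow> \<bar>x\<bar> \<le> \<epsilon> * C"
  shows "x = 0"
proof (rule dense_eq0_I)
  fix e :: real assume "0 < e"
  then have "\<bar>x\<bar> \<le> e / (\<bar>C\<bar> + 1) * C" by (intro assms) (simp add: add_pos_nonneg)
  also have "\<dots> \<le> e / (\<bar>C\<bar> + 1) * \<bar>C\<bar>" using \<open>0 < e\<close> by (intro mult_left_mono) auto
  also have "\<dots> \<le> e" using \<open>0 < e\<close> by (simp add: divide_le_eq field_simps)
  finally show "\<bar>x\<bar> \<le> e" .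
qed

lemma delta_lipdual: "delta z x \<in> lipdual z"
proof (rule lipdualI[where C="dist x z"])
  fix f g :: "'a \<Rightarrow> real" and a b :: real assume "f \<in> lip0 z" "g \<in> lip0 z"
  then show "delta z x (\<lambda>x. a * f x + b * g x) = a * delta z x f + b * delta z x g"
    using lip0_lincomb[of f z g a b] by (simp add: delta_def)
next
  fix f :: "'a \<Rightarrow> real" assume f: "f \<in> lip0 z"
  then show "\<bar>delta z x f\<bar> \<le> dist x z * lipnorm f"
    using abs_diff_le_lipnorm[OF f, of x z] lip0_origin[OF f] by (simp add: delta_def mult.commute)
qed (simp add: delta_def)

lemma lip0_sum:
  "finite P \<Longrightarrow> (\<And>q. q \<in> P \<Longrightarrow> g q \<in> lip0 z) \<Longrightarrow> (\<lambda>x. \<Sum>q\<in>P. a q * g q x) \<in> lip0 z"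
proof (induction P rule: finite_induct)
  case empty
  then show ?case using lip0_zero_fun by simp
next
  case (insert q P)
  then show ?case using lip0_lincomb[of "g q" z "\<lambda>x. \<Sum>q\<in>P. a q * g q x" "a q" 1] by simp
qed

lemma lipdual_sum:
  assumes "\<nu> \<in> lipdual z"
  shows "finite P \<Longrightarrow> (\<And>q. q \<in> P \<Longrightarrow> g q \<in> lip0 z) \<Longrightarrow>
    \<nu> (\<lambda>x. \<Sum>q\<in>P. a q * g q x) = (\<Sum>q\<in>P. a q * \<nu> (g q))"
proof (induction P rule: finite_induct)
  case empty
  then show ?case using lipdual_zero_fun[OF assms] by simp
next
  case (insert q P)
  then show ?case
    using lipdual_lincomb[OF assms, of "g q" "\<lambda>x. \<Sum>q\<in>P. a q * g q x" "a q" 1] lip0_sum[of P g z a]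
    by simp
qed

lemma delta_span_lipdual: "\<nu> \<in> delta_span z \<Longrightarrow> \<nu> \<in> lipdual z"
proof -
  have "(\<lambda>f. \<Sum>i<n. c i * delta z (p i) f) \<in> lipdual z" for n :: nat and c p
  proof (induction n)
    case 0
    then show ?case using lipdual_scale_fun[OF delta_lipdual[of z z], of 0] by simp
  next
    case (Suc n)
    then show ?case using lipdual_lincomb_fun[OF Suc delta_lipdual, of 1 "c n" "p n"] by simp
  qed
  then show "\<nu> \<in> delta_span z \<Longrightarrow> \<nu> \<in> lipdual z" unfolding delta_span_def by blast
qed

lemma delta_span_repr:
  assumes "\<nu> \<in> delta_span z"
  obtains P w where "finite P" "z \<notin> P" "\<And>g. g \<in> lip0 z \<Longrightarrow> \<nu> g = (\<Sum>q\<in>P. w q * g q)"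
proof -
  obtain n :: nat and c :: "nat \<Rightarrow> real" and p :: "nat \<Rightarrow> 'a"
    where \<nu>: "\<nu> = (\<lambda>f. \<Sum>i<n. c i * delta z (p i) f)"
    using assms unfolding delta_span_def by blast
  define P where "P = p ` {..<n} - {z}"
  define w where "w q = (\<Sum>i\<in>{i\<in>{..<n}. p i = q}. c i)" for q
  have "\<nu> g = (\<Sum>q\<in>P. w q * g q)" if g: "g \<in> lip0 z" for g
  proof -
    have "\<nu> g = (\<Sum>i<n. c i * g (p i))" using g by (simp add: \<nu> delta_def)
    also have "\<dots> = (\<Sum>q\<in>p ` {..<n}. \<Sum>i\<in>{i\<in>{..<n}. p i = q}. c i * g (p i))"
      by (rule sum.image_gen) simp
    also have "\<dots> = (\<Sum>q\<in>p ` {..<n}. w q * g q)"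
      by (rule sum.cong) (auto simp: w_def sum_distrib_right)
    also have "\<dots> = (\<Sum>q\<in>P. w q * g q)"
      unfolding P_def by (rule sum.mono_neutral_right) (use lip0_origin[OF g] in auto)
    finally show ?thesis .
  qed
  then show ?thesis using that[of P w] by (simp add: P_def)
qed

lemma free_lipdual: "\<mu> \<in> free z \<Longrightarrow> \<mu> \<in> lipdual z"
  by (simp add: free_def)

lemma free_approx:
  assumes "\<mu> \<in> free z" "0 < \<epsilon>"
  obtains \<nu> where "\<nu> \<in> delta_span z" "\<And>f. f \<in> lip0 z \<Longrightarrow> \<bar>\<mu> f - \<nu> f\<bar> \<le> \<epsilon> * lipnorm f"
proof -
  obtain \<nu> where "\<nu> \<in> delta_span z" "dualnorm z (\<lambda>f. \<mu> f - \<nu> f) < \<epsilon>"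
    using assms unfolding free_def by blast
  then show ?thesis
    using that abs_diff_le_dualnorm[OF free_lipdual[OF assms(1)] delta_span_lipdual] by blast
qed

text \<open>Testing an approximating finite combination of point evaluations against the signs of its
  coefficients bounds their \<open>\<ell>\<^sub>1\<close>-norm.\<close>

lemma free_zero_on_bounded:
  assumes discrete: "uniformly_discrete TYPE('a::metric_space)"
    and \<nu>: "\<nu> \<in> free (z::'a)" and bumps: "\<And>q. q \<noteq> z \<Longrightarrow> \<nu> (point_bump z q) = 0"
    and b: "b \<in> lip0 z" "\<And>x. \<bar>b x\<bar> \<le> K"
  shows "\<nu> b = 0"
proof -
  obtain \<theta> where \<theta>: "0 < \<theta>" "\<And>u v::'a. u \<noteq> v \<Longrightarrow> \<theta> \<le> dist u v"
    using uniformly_discreteE[OF discrete] by blast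
  have "0 \<le> K" using b(2)[of z] by simp
  show ?thesis
  proof (rule eq_0_if_abs_le_eps_mult[where C = "lipnorm b + 2 * K / \<theta>"])
    fix \<epsilon> :: real assume "0 < \<epsilon>"
    then obtain \<nu>' where span: "\<nu>' \<in> delta_span z"
      and close: "\<And>f. f \<in> lip0 z \<Longrightarrow> \<bar>\<nu> f - \<nu>' f\<bar> \<le> \<epsilon> * lipnorm f"
      using free_approx[OF \<nu>] by blast
    obtain P w where P: "finite P" "z \<notin> P" and \<nu>': "\<And>g. g \<in> lip0 z \<Longrightarrow> \<nu>' g = (\<Sum>q\<in>P. w q * g q)"
      using delta_span_repr[OF span] by blast
    define sg where "sg = (\<lambda>x. \<Sum>q\<in>P. sgn (w q) * point_bump z q x)"
    have sg_eq: "sg x = (if x \<in> P then sgn (w x) else 0)" for x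
    proof -
      have "sg x = (\<Sum>q\<in>P. if x = q then sgn (w q) else 0)"
        unfolding sg_def by (rule sum.cong) (use P(2) in \<open>auto simp: point_bump_def indicator_def\<close>)
      then show ?thesis by (simp add: sum.delta'[OF P(1)])
    qed
    have "\<bar>sg x\<bar> \<le> 1" for x by (simp add: sg_eq abs_sgn_eq)
    moreover have "sg z = 0" using P(2) by (simp add: sg_eq)
    ultimately have sg: "sg \<in> lip0 z" "lipnorm sg \<le> 2 * 1 / \<theta>"
      using bounded_lip0[OF \<theta>, of sg 1 z] by blast+
    have "\<nu> sg = (\<Sum>q\<in>P. sgn (w q) * \<nu> (point_bump z q))"
      unfolding sg_def by (rule lipdual_sum[OF free_lipdual[OF \<nu>] P(1)]) (rule point_bump_lip0[OF discrete])
    also have "\<dots> = 0" by (rule sum.neutral) (use P(2) bumps in fastforce)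
    finally have "\<nu> sg = 0" .
    moreover have "\<nu>' sg = (\<Sum>q\<in>P. \<bar>w q\<bar>)"
      unfolding \<nu>'[OF sg(1)] by (rule sum.cong) (auto simp: sg_eq abs_sgn)
    ultimately have "(\<Sum>q\<in>P. \<bar>w q\<bar>) = \<bar>\<nu> sg - \<nu>' sg\<bar>" by (simp add: sum_nonneg)
    also have "\<dots> \<le> \<epsilon> * lipnorm sg" by (rule close[OF sg(1)])
    also have "\<dots> \<le> \<epsilon> * (2 / \<theta>)" using mult_left_mono[OF sg(2) less_imp_le[OF \<open>0 < \<epsilon>\<close>]] by simp
    finally have sum_w: "(\<Sum>q\<in>P. \<bar>w q\<bar>) \<le> \<epsilon> * (2 / \<theta>)" .
    have "\<bar>\<nu>' b\<bar> \<le> (\<Sum>q\<in>P. \<bar>w q\<bar>) * K"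
      unfolding \<nu>'[OF b(1)] sum_distrib_right
      by (rule order_trans[OF sum_abs sum_mono]) (simp add: abs_mult mult_left_mono b(2))
    also have "\<dots> \<le> \<epsilon> * (2 / \<theta>) * K" by (rule mult_right_mono[OF sum_w \<open>0 \<le> K\<close>])
    finally have "\<bar>\<nu>' b\<bar> \<le> \<epsilon> * (2 * K / \<theta>)" by simp
    then show "\<bar>\<nu> b\<bar> \<le> \<epsilon> * (lipnorm b + 2 * K / \<theta>)"
      using close[OF b(1)] by (simp add: algebra_simps)
  qed
qed

text \<open>Truncating \<open>f\<close> above its values at the points of an approximating combination
  reduces to the bounded case.\<close>

lemma free_eq_0_if_bumps:
  assumes discrete: "uniformly_discrete TYPE('a::metric_space)"
    and \<nu>: "\<nu> \<in> free (z::'a)" and bumps: "\<And>q. q \<noteq> z \<Longrightarrow> \<nu> (point_bump z q) = 0"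
  shows "\<nu> f = 0"
proof (cases "f \<in> lip0 z")
  case False
  then show ?thesis using lipdual_outside[OF free_lipdual[OF \<nu>]] by simp
next
  case f: True
  show ?thesis
  proof (rule eq_0_if_abs_le_eps_mult[where C = "2 * lipnorm f"])
    fix \<epsilon> :: real assume "0 < \<epsilon>"
    then obtain \<nu>' where span: "\<nu>' \<in> delta_span z"
      and close: "\<And>f. f \<in> lip0 z \<Longrightarrow> \<bar>\<nu> f - \<nu>' f\<bar> \<le> \<epsilon> * lipnorm f"
      using free_approx[OF \<nu>] by blast
    obtain P w where P: "finite P" "z \<notin> P" and \<nu>': "\<And>g. g \<in> lip0 z \<Longrightarrow> \<nu>' g = (\<Sum>q\<in>P. w q * g q)"
      using delta_span_repr[OF span] by blast
    define R where "R = (\<Sum>q\<in>P. \<bar>f q\<bar>)"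
    define fR where "fR = (\<lambda>x. max (- R) (min R (f x)))"
    have fR_lip: "\<bar>fR x - fR y\<bar> \<le> lipnorm f * dist x y" for x y
      using abs_diff_le_lipnorm[OF f, of x y] unfolding fR_def by (simp add: abs_le_iff max_def min_def)
    have "0 \<le> R" unfolding R_def by (simp add: sum_nonneg)
    then have fR: "fR \<in> lip0 z" "lipnorm fR \<le> lipnorm f" "\<And>x. \<bar>fR x\<bar> \<le> R"
      using lip0I[OF _ fR_lip] lipnorm_leI[OF fR_lip lipnorm_nonneg[OF f]] lip0_origin[OF f]
      by (auto simp: fR_def abs_le_iff)
    have "fR q = f q" if "q \<in> P" for q
      using member_le_sum[OF that, of "\<lambda>q. \<bar>f q\<bar>"] P by (simp add: fR_def R_def abs_le_iff)
    then have "\<nu>' fR = \<nu>' f" using \<nu>'[OF f] \<nu>'[OF fR(1)] by simp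
    moreover have "\<nu> fR = 0" by (rule free_zero_on_bounded[OF discrete \<nu> bumps fR(1,3)])
    ultimately have "\<bar>\<nu> f\<bar> \<le> \<bar>\<nu> f - \<nu>' f\<bar> + \<bar>\<nu> fR - \<nu>' fR\<bar>" by simp
    also have "\<dots> \<le> \<epsilon> * lipnorm f + \<epsilon> * lipnorm f"
      using close[OF f] close[OF fR(1)] mult_left_mono[OF fR(2), of \<epsilon>] \<open>0 < \<epsilon>\<close> by linarith
    finally show "\<bar>\<nu> f\<bar> \<le> \<epsilon> * (2 * lipnorm f)" by simp
  qed
qed

section \<open>Preserved extreme points are molecules\<close>

lemma preserved_extremeD:
  assumes "preserved_extreme z \<mu>"
  shows "\<mu> \<in> free z" "\<mu> \<in> dual_ball z" "\<mu> \<in> lipdual z" "extreme_pt (dual_ball z) \<mu>"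
  using assms unfolding preserved_extreme_def free_ball_def dual_ball_def by blast+

lemma extreme_pt_dual_ball_nonzero:
  assumes "extreme_pt (dual_ball z) \<mu>" "x \<noteq> z"
  shows "\<exists>f. \<mu> f \<noteq> 0"
proof (rule ccontr)
  assume "\<nexists>f. \<mu> f \<noteq> 0"
  then have "\<mu> = (\<lambda>f. (molecule z x z f + molecule z z x f) / 2)"
    by (simp add: fun_eq_iff molecule_swap[of z x z])
  then have "molecule z x z = molecule z z x"
    using assms(1) molecule_dual_ball unfolding extreme_pt_def by blast
  then show False
    using molecule_dist[OF assms(2), of z] molecule_swap[of z x z] by (metis one_neq_neg_one)
qed

lemma free_diff_delta:
  assumes "\<mu> \<in> free z"
  shows "(\<lambda>f. \<mu> f - a * delta z r f) \<in> free z"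
  unfolding free_def
proof (intro CollectI conjI allI impI)
  show "(\<lambda>f. \<mu> f - a * delta z r f) \<in> lipdual z"
    using lipdual_lincomb_fun[OF free_lipdual[OF assms] delta_lipdual, of 1 "- a"] by simp
  fix \<epsilon> :: real assume "0 < \<epsilon>"
  then obtain \<nu> where \<nu>: "\<nu> \<in> delta_span z" "dualnorm z (\<lambda>f. \<mu> f - \<nu> f) < \<epsilon>"
    using assms unfolding free_def by blast
  then obtain n :: nat and c p where \<nu>_eq: "\<nu> = (\<lambda>f. \<Sum>i<n. c i * delta z (p i) f)"
    unfolding delta_span_def by blast
  have "(\<lambda>f. \<nu> f - a * delta z r f) = (\<lambda>f. \<Sum>i<Suc n. (c(n := - a)) i * delta z ((p(n := r)) i) f)"
    unfolding \<nu>_eq by (simp add: fun_eq_iff)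
  then have "(\<lambda>f. \<nu> f - a * delta z r f) \<in> delta_span z" unfolding delta_span_def by blast
  moreover have "(\<lambda>f. (\<mu> f - a * delta z r f) - (\<nu> f - a * delta z r f)) = (\<lambda>f. \<mu> f - \<nu> f)" by simp
  ultimately show "\<exists>\<nu>\<in>delta_span z. dualnorm z (\<lambda>f. (\<mu> f - a * delta z r f) - \<nu> f) < \<epsilon>"
    using \<nu>(2) by metis
qed

context
  fixes z :: "'a::metric_space" and \<mu>
  assumes discrete: "uniformly_discrete TYPE('a)" and \<mu>: "\<mu> \<in> free z"
begin

lemma free_bump_nonzero:
  assumes "\<exists>f. \<mu> f \<noteq> 0"
  obtains r where "r \<noteq> z" "\<mu> (point_bump z r) \<noteq> 0"
  using free_eq_0_if_bumps[OF discrete \<mu>] assms by blast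

lemma free_two_bumps_nonzero:
  assumes "\<exists>f. \<mu> f \<noteq> 0"
  obtains r s where "r \<noteq> s" "\<mu> (point_bump z r) \<noteq> 0" "\<mu> (point_bump z s) \<noteq> 0"
proof -
  obtain r where r: "r \<noteq> z" "\<mu> (point_bump z r) \<noteq> 0" using free_bump_nonzero[OF assms] by blast
  show ?thesis
  proof (cases "\<exists>s. s \<noteq> z \<and> s \<noteq> r \<and> \<mu> (point_bump z s) \<noteq> 0")
    case True
    then show ?thesis using that r by blast
  next
    case False
    define a where "a = \<mu> (point_bump z r)"
    have "(\<lambda>f. \<mu> f - a * delta z r f) g = 0" for g
    proof (rule free_eq_0_if_bumps[OF discrete free_diff_delta[OF \<mu>]])
      fix q assume "q \<noteq> z"
      then show "\<mu> (point_bump z q) - a * delta z r (point_bump z q) = 0"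
        using False point_bump_lip0[OF discrete, of z q] r(1)
        by (cases "q = r") (auto simp: a_def delta_def point_bump_def)
    qed
    from this[of "point_bump z z"] have "\<mu> (point_bump z z) = a"
      using point_bump_lip0[OF discrete, of z z] r(1) by (simp add: delta_def point_bump_def)
    then show ?thesis using that[of r z] r by (simp add: a_def)
  qed
qed

end

lemma preserved_extreme_molecule:
  fixes z :: "'a::metric_space"
  assumes discrete: "uniformly_discrete TYPE('a)" and pe: "preserved_extreme z \<mu>" and "x \<noteq> z"
  obtains x y where "x \<noteq> y" "\<mu> = molecule z x y"
proof -
  note \<mu> = preserved_extremeD[OF pe]
  obtain \<Lambda> where ext: "dominated_extension z \<mu> \<Lambda>"
    using dual_ball_dominated_extension[OF \<mu>(2)] by blast
  obtain r s where rs: "r \<noteq> s" "\<mu> (point_bump z r) \<noteq> 0" "\<mu> (point_bump z s) \<noteq> 0"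
    using free_two_bumps_nonzero[OF discrete \<mu>(1) extreme_pt_dual_ball_nonzero[OF \<mu>(4) \<open>x \<noteq> z\<close>]]
    by blast
  obtain c where "\<bar>c\<bar> \<le> 1" "\<And>f. \<mu> f = c * molecule z r s f"
    using ext_concentrated_multiple_of_molecule[OF ext \<mu>(3,4) discrete rs] by blast
  then have "\<mu> = molecule z r s \<or> \<mu> = molecule z s r"
    by (rule extreme_multiple_of_molecule[OF \<mu>(4) rs(1)])
  then show ?thesis using that rs(1) by metis
qed

section \<open>The gap condition\<close>

lemma de_leeuw_path_bound:
  assumes "f \<in> lip0 z" "p \<noteq> x" "p \<noteq> y"
  shows "(f x - f y) + t * (dist x p * indicator S (x, p) + dist p y * indicator S (p, y))
    \<le> (dist x p + dist p y) * fsup (\<lambda>w. de_leeuw f w + t * indicator S w)"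
proof -
  define h where "h = (\<lambda>w. de_leeuw f w + t * indicator S w)"
  have h: "h \<in> bounded_funs"
    unfolding h_def using bounded_funs_lincomb[OF de_leeuw_bounded_funs[OF assms(1)] indicator_in_bounded_funs, of 1 t S]
    by simp
  have "dist x p > 0" "dist p y > 0" using assms by auto
  then have "(f x - f y) + t * (dist x p * indicator S (x, p) + dist p y * indicator S (p, y))
      = dist x p * h (x, p) + dist p y * h (p, y)"
    by (simp add: h_def de_leeuw_def field_simps)
  also have "\<dots> \<le> dist x p * fsup h + dist p y * fsup h"
    by (intro add_mono mult_left_mono fsup_upper[OF h]) auto
  finally show ?thesis by (simp add: h_def algebra_simps)
qed

lemma no_gap_sequence:
  assumes "\<not> (\<exists>\<delta>>0. \<forall>p. p \<noteq> x \<longrightarrow> p \<noteq> y \<longrightarrow> dist x y + \<delta> \<le> dist x p + dist p y)"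
  obtains pp where "\<And>n. pp n \<noteq> x" "\<And>n. pp n \<noteq> y"
    "\<And>n. dist x (pp n) + dist (pp n) y < dist x y + 1 / Suc n"
proof -
  have "\<forall>n::nat. \<exists>p. p \<noteq> x \<and> p \<noteq> y \<and> dist x p + dist p y < dist x y + 1 / Suc n"
    using assms by (metis not_le of_nat_0_less_iff zero_less_Suc zero_less_divide_1_iff)
  then show ?thesis using that by metis
qed

definition path_mass :: "('a \<times> 'a) set \<Rightarrow> 'a::metric_space \<Rightarrow> 'a \<Rightarrow> 'a \<Rightarrow> real" where
  "path_mass S x y p =
     (dist x p * indicator S (x, p) + dist p y * indicator S (p, y)) / (dist x p + dist p y)"

lemma path_limit_bound:
  assumes "x \<noteq> y" and \<mu>: "\<And>f. f \<in> lip0 z \<Longrightarrow> \<mu> f = (f x - f y) / dist x y"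
    and pp: "\<And>n. pp n \<noteq> x" "\<And>n. pp n \<noteq> y"
    and lim: "(\<lambda>n. dist x (pp n) + dist (pp n) y) \<longlonglongrightarrow> dist x y"
    and bound: "\<And>n. path_mass S x y (pp n) \<in> {0..b}"
  obtains v where "v \<le> b"
    "\<And>f t. f \<in> lip0 z \<Longrightarrow> \<mu> f + t * v \<le> fsup (\<lambda>w. de_leeuw f w + t * indicator S w)"
proof -
  define D where "D = dist x y"
  define L where "L n = dist x (pp n) + dist (pp n) y" for n
  have "D > 0" using \<open>x \<noteq> y\<close> by (simp add: D_def)
  have "L n > 0" for n using pp(1)[of n] by (simp add: L_def add_pos_nonneg)
  obtain v r where v: "v \<in> {0..b}" and r: "strict_mono (r :: nat \<Rightarrow> nat)"
    and v_lim: "((\<lambda>n. path_mass S x y (pp n)) \<circ> r) \<longlonglongrightarrow> v"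
    using compact_Icc[THEN compact_imp_seq_compact, THEN seq_compactE] bound by metis
  have "\<mu> f + t * v \<le> fsup (\<lambda>w. de_leeuw f w + t * indicator S w)" if f: "f \<in> lip0 z" for f t
  proof -
    have "(\<lambda>n. (D / L (r n)) * \<mu> f + t * path_mass S x y (pp (r n))) \<longlonglongrightarrow> (D / D) * \<mu> f + t * v"
      using v_lim LIMSEQ_subseq_LIMSEQ[OF lim r] \<open>D > 0\<close>
      by (intro tendsto_intros) (auto simp: o_def L_def D_def)
    then have "(\<lambda>n. (D / L (r n)) * \<mu> f + t * path_mass S x y (pp (r n))) \<longlonglongrightarrow> \<mu> f + t * v"
      using \<open>D > 0\<close> by simp
    moreover have "(D / L (r n)) * \<mu> f + t * path_mass S x y (pp (r n))
        \<le> fsup (\<lambda>w. de_leeuw f w + t * indicator S w)" for n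
    proof -
      have "L (r n) * ((D / L (r n)) * \<mu> f + t * path_mass S x y (pp (r n)))
          = (f x - f y) + t * (dist x (pp (r n)) * indicator S (x, pp (r n))
              + dist (pp (r n)) y * indicator S (pp (r n), y))"
        using \<mu>[OF f] \<open>D > 0\<close> \<open>L (r n) > 0\<close>
        by (simp add: path_mass_def D_def distrib_left) (simp add: L_def field_simps)
      also have "\<dots> \<le> L (r n) * fsup (\<lambda>w. de_leeuw f w + t * indicator S w)"
        unfolding L_def by (rule de_leeuw_path_bound[OF f pp(1,2)])
      finally show ?thesis using \<open>L (r n) > 0\<close> by simp
    qed
    ultimately show ?thesis by (intro LIMSEQ_le_const2) auto
  qed
  then show ?thesis using that v by auto
qed

lemma path_mass_through_endpoint:
  assumes "x \<noteq> y" "p \<noteq> x" "p \<noteq> y" "\<theta> \<le> dist x p" "\<theta> \<le> dist p y" "0 < \<theta>"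
    and "w = x \<or> w = y" and "dist x p + dist p y \<le> dist x y + 1"
  shows "path_mass (pairs_through w) x y p \<in> {0 .. 1 - \<theta> / (dist x y + 1)}"
proof -
  define L where "L = dist x p + dist p y"
  have "0 < L" using assms by (simp add: L_def add_pos_pos)
  obtain c where c: "path_mass (pairs_through w) x y p = 1 - c / L" "\<theta> \<le> c" "c \<le> L"
  proof (cases "w = x")
    case True
    then show ?thesis using that[of "dist p y"] assms \<open>0 < L\<close>
      by (simp add: path_mass_def pairs_through_def L_def field_simps)
  next
    case False
    then show ?thesis using that[of "dist x p"] assms \<open>0 < L\<close>
      by (simp add: path_mass_def pairs_through_def L_def field_simps)
  qed
  have "\<theta> / (dist x y + 1) \<le> \<theta> / L"
    using assms \<open>0 < L\<close> by (intro divide_left_mono) (auto simp: L_def)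
  also have "\<dots> \<le> c / L" using c \<open>0 < L\<close> by (intro divide_right_mono) auto
  finally show ?thesis using c \<open>0 < L\<close> by simp
qed

lemma preserved_extreme_molecule_gap:
  fixes z :: "'a::metric_space"
  assumes discrete: "uniformly_discrete TYPE('a)" and pe: "preserved_extreme z \<mu>"
    and "x \<noteq> y" and \<mu>_eq: "\<mu> = molecule z x y"
  shows "\<exists>\<delta>>0. \<forall>p. p \<noteq> x \<longrightarrow> p \<noteq> y \<longrightarrow> dist x y + \<delta> \<le> dist x p + dist p y"
proof (rule ccontr)
  assume "\<not> ?thesis"
  then obtain pp where pp: "\<And>n. pp n \<noteq> x" "\<And>n. pp n \<noteq> y"
    and close: "\<And>n. dist x (pp n) + dist (pp n) y < dist x y + 1 / Suc n"
    by (rule no_gap_sequence) blast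
  obtain \<theta> where \<theta>: "0 < \<theta>" "\<And>u v::'a. u \<noteq> v \<Longrightarrow> \<theta> \<le> dist u v"
    using uniformly_discreteE[OF discrete] by blast
  note \<mu> = preserved_extremeD[OF pe]
  define w where "w = (if x \<noteq> z then x else y)"
  have w: "w = x \<or> w = y" "w \<noteq> z" using \<open>x \<noteq> y\<close> by (auto simp: w_def)
  have lim: "(\<lambda>n. dist x (pp n) + dist (pp n) y) \<longlonglongrightarrow> dist x y"
  proof (rule real_tendsto_sandwich[where f="\<lambda>n. dist x y" and h="\<lambda>n. dist x y + inverse (real (Suc n))"])
    show "(\<lambda>n. dist x y + inverse (real (Suc n))) \<longlonglongrightarrow> dist x y"
      using tendsto_add[OF tendsto_const LIMSEQ_inverse_real_of_nat] by simp
  qed (use close dist_triangle[of x y] in \<open>auto simp: less_imp_le inverse_eq_divide\<close>)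
  have mass_bound: "path_mass (pairs_through w) x y (pp n) \<in> {0 .. 1 - \<theta> / (dist x y + 1)}" for n
  proof (rule path_mass_through_endpoint[OF \<open>x \<noteq> y\<close> pp(1,2) _ _ \<theta>(1) w(1)])
    show "\<theta> \<le> dist x (pp n)" "\<theta> \<le> dist (pp n) y"
      using \<theta>(2)[of x "pp n"] \<theta>(2)[of "pp n" y] pp[of n] by auto
    have "1 / real (Suc n) \<le> 1" by simp
    then show "dist x (pp n) + dist (pp n) y \<le> dist x y + 1" using close[of n] by linarith
  qed
  have "\<mu> f = (f x - f y) / dist x y" if "f \<in> lip0 z" for f
    using that by (simp add: \<mu>_eq molecule_def)
  then obtain v where v: "v \<le> 1 - \<theta> / (dist x y + 1)"
    and bound: "\<And>f t. f \<in> lip0 z \<Longrightarrow> \<mu> f + t * v \<le> fsup (\<lambda>w'. de_leeuw f w' + t * indicator (pairs_through w) w')"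
    using path_limit_bound[OF \<open>x \<noteq> y\<close> _ pp lim mass_bound] by blast
  obtain \<Lambda> where ext: "dominated_extension z \<mu> \<Lambda>" and mass: "\<Lambda> (indicator (pairs_through w)) = v"
    using dominated_extension_exists[OF \<mu>(3) bound] by blast
  have "\<mu> (point_bump z w) \<noteq> 0"
    using point_bump_lip0[OF discrete, of z w] w \<open>x \<noteq> y\<close>
    by (auto simp: \<mu>_eq molecule_def point_bump_def)
  then have "\<Lambda> (indicator (- pairs_through w)) = 0"
    by (rule ext_concentrated_at_point[OF ext \<mu>(3,4) discrete])
  then have "v = 1" using ext_indicator_compl[OF ext, of "pairs_through w"] mass by simp
  moreover have "0 < \<theta> / (dist x y + 1)" using \<theta>(1) by (simp add: add_nonneg_pos)
  ultimately show False using v by simp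
qed

section \<open>Strong exposure\<close>

definition peaking_function :: "'a::metric_space \<Rightarrow> 'a \<Rightarrow> 'a \<Rightarrow> real \<Rightarrow> ('a \<Rightarrow> real) \<Rightarrow> bool" where
  "peaking_function z x y k g \<longleftrightarrow> g \<in> lip0 z \<and> g x - g y = dist x y \<and>
     (\<forall>p q. \<bar>g p - g q\<bar> \<le> dist p q) \<and>
     (\<forall>p q. \<not> ((p = x \<and> q = y) \<or> (p = y \<and> q = x)) \<longrightarrow> \<bar>g p - g q\<bar> \<le> k * dist p q)"

lemma peaking_functionD:
  assumes "peaking_function z x y k g"
  shows "g \<in> lip0 z" "g x - g y = dist x y" "\<bar>g p - g q\<bar> \<le> dist p q"
    "\<not> ((p = x \<and> q = y) \<or> (p = y \<and> q = x)) \<Longrightarrow> \<bar>g p - g q\<bar> \<le> k * dist p q"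
  using assms by (simp_all add: peaking_function_def)

text \<open>Up to a constant, the peaking function is the largest \<open>k\<close>-Lipschitz function with values
  \<open>\<plusminus>dist x y / 2\<close> at \<open>x\<close> and \<open>y\<close>; the gap makes it \<open>k\<close>-Lipschitz on every pair other than
  \<open>{x, y}\<close>.\<close>

definition peak_profile :: "real \<Rightarrow> real \<Rightarrow> 'a::metric_space \<Rightarrow> 'a \<Rightarrow> 'a \<Rightarrow> real" where
  "peak_profile D k x y p =
     (if p = x then D / 2 else if p = y then - D / 2 else min (D / 2 + k * dist p x) (- D / 2 + k * dist p y))"

lemma peak_profile_lower:
  assumes "q \<noteq> x" "q \<noteq> y" "D \<le> k * (dist q x + dist q y)" "0 \<le> k" "0 \<le> D"
  shows "D / 2 - k * dist q x \<le> peak_profile D k x y q" "- D / 2 - k * dist q y \<le> peak_profile D k x y q"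
  using assms mult_nonneg_nonneg[OF assms(4) zero_le_dist, of q x]
    mult_nonneg_nonneg[OF assms(4) zero_le_dist, of q y]
  by (auto simp: peak_profile_def algebra_simps)

lemma peak_profile_lipschitz_off_pair:
  assumes "x \<noteq> y" "0 \<le> k" "0 \<le> D" and gap: "\<And>q. q \<noteq> x \<Longrightarrow> q \<noteq> y \<Longrightarrow> D \<le> k * (dist q x + dist q y)"
    and pq: "\<not> ((p = x \<and> q = y) \<or> (p = y \<and> q = x))"
  shows "peak_profile D k x y p - peak_profile D k x y q \<le> k * dist p q"
proof -
  have triangle: "k * dist p r - k * dist q r \<le> k * dist p q" for r
    using mult_left_mono[OF dist_triangle[of p r q], of k] \<open>0 \<le> k\<close> by (simp add: algebra_simps)
  consider "p = q" | "p \<noteq> q" "p = x \<or> p = y" | "p \<noteq> x" "p \<noteq> y" by blast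
  then show ?thesis
  proof cases
    case 2
    then have "q \<noteq> x" "q \<noteq> y" using pq by auto
    with 2 show ?thesis using peak_profile_lower[OF _ _ gap \<open>0 \<le> k\<close> \<open>0 \<le> D\<close>, of q] assms(1)
      by (auto simp: peak_profile_def dist_commute)
  next
    case 3
    then show ?thesis using triangle[of x] triangle[of y] assms(1)
      by (auto simp: peak_profile_def min_def)
  qed simp
qed

lemma peaking_function_exists:
  assumes "x \<noteq> y" "0 < \<delta>"
    and gap: "\<And>p. p \<noteq> x \<Longrightarrow> p \<noteq> y \<Longrightarrow> dist x y + \<delta> \<le> dist x p + dist p y"
  obtains g where "peaking_function z x y (dist x y / (dist x y + \<delta>)) g"
proof -
  define D where "D = dist x y"
  define k where "k = D / (D + \<delta>)"
  define g0 where "g0 = peak_profile D k x y"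
  have "0 < D" using assms by (simp add: D_def)
  then have k: "0 \<le> k" "k < 1" "k * (D + \<delta>) = D"
    using \<open>0 < \<delta>\<close> unfolding k_def by (simp_all add: divide_less_eq)
  have "D \<le> k * (dist q x + dist q y)" if "q \<noteq> x" "q \<noteq> y" for q
  proof -
    have "D = k * (D + \<delta>)" using k(3) by simp
    also have "\<dots> \<le> k * (dist q x + dist q y)"
      using gap[OF that] k(1) by (intro mult_left_mono) (simp_all add: D_def dist_commute)
    finally show ?thesis .
  qed
  then have one_way: "g0 p - g0 q \<le> k * dist p q" if "\<not> ((p = x \<and> q = y) \<or> (p = y \<and> q = x))" for p q
    unfolding g0_def by (rule peak_profile_lipschitz_off_pair[OF \<open>x \<noteq> y\<close> k(1) less_imp_le[OF \<open>0 < D\<close>] _ that])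
  have off_pair: "\<bar>g0 p - g0 q\<bar> \<le> k * dist p q" if "\<not> ((p = x \<and> q = y) \<or> (p = y \<and> q = x))" for p q
  proof -
    have "\<not> ((q = x \<and> p = y) \<or> (q = y \<and> p = x))" using that by auto
    then have "g0 q - g0 p \<le> k * dist p q" using one_way[of q p] by (simp add: dist_commute)
    then show ?thesis using one_way[OF that] by (simp add: abs_le_iff)
  qed
  have at_pair: "g0 x - g0 y = D" using \<open>x \<noteq> y\<close> by (simp add: g0_def peak_profile_def)
  have lip1: "\<bar>g0 p - g0 q\<bar> \<le> dist p q" for p q
  proof (cases "(p = x \<and> q = y) \<or> (p = y \<and> q = x)")
    case True
    then show ?thesis using at_pair by (auto simp: D_def dist_commute abs_minus_commute)
  next
    case False
    then show ?thesis using off_pair[OF False] mult_right_mono[of k 1 "dist p q"] k by simp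
  qed
  have "(\<lambda>p. g0 p - g0 z) \<in> lip0 z" by (rule lip0I[where L=1]) (simp_all add: lip1)
  then have "peaking_function z x y k (\<lambda>p. g0 p - g0 z)"
    unfolding peaking_function_def using lip1 off_pair at_pair by (simp add: D_def)
  then show ?thesis using that by (simp add: k_def D_def)
qed

lemma peaking_function_value:
  assumes "peaking_function z x y k g" "x \<noteq> y"
  shows "molecule z x y g = 1" "lipnorm g = 1"
proof -
  note g = peaking_functionD(1-3)[OF assms(1)]
  show "molecule z x y g = 1" using g assms(2) by (simp add: molecule_def)
  have "lipnorm g \<le> 1" by (rule lipnorm_leI) (simp_all add: g(3))
  moreover have "dist x y \<le> lipnorm g * dist x y" using abs_diff_le_lipnorm[OF g(1), of x y] g(2) by simp
  ultimately show "lipnorm g = 1" using assms(2) by simp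
qed

text \<open>The correction \<open>h\<close> vanishes across \<open>{x, y}\<close>, and off that pair \<open>g\<close> has Lipschitz
  slack \<open>1 - k\<close>.\<close>

lemma peaking_function_perturb:
  assumes peak: "peaking_function z x y k g" and "x \<noteq> y"
    and f: "f \<in> lip0 z" and "0 < lipnorm f"
    and s: "\<bar>s\<bar> \<le> (1 - k) / (2 * lipnorm f)"
  defines "h \<equiv> (\<lambda>p. f p - molecule z x y f * g p)"
  shows "lipnorm (\<lambda>p. g p + s * h p) \<le> 1"
proof (rule lipnorm_leI)
  note g = peaking_functionD(2-4)[OF peak]
  have m: "\<bar>molecule z x y f\<bar> \<le> lipnorm f" by (rule abs_molecule_le[OF f])
  have h_diff: "h p - h q = (f p - f q) - molecule z x y f * (g p - g q)" for p q
    by (simp add: h_def algebra_simps)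
  have "h x - h y = 0" using g(1) f \<open>x \<noteq> y\<close> unfolding h_diff by (simp add: molecule_def)
  fix p q :: 'a
  have diff: "(g p + s * h p) - (g q + s * h q) = (g p - g q) + s * (h p - h q)"
    by (simp add: algebra_simps)
  show "\<bar>(g p + s * h p) - (g q + s * h q)\<bar> \<le> 1 * dist p q"
  proof (cases "(p = x \<and> q = y) \<or> (p = y \<and> q = x)")
    case True
    then have "h p - h q = 0" using \<open>h x - h y = 0\<close> by auto
    then show ?thesis using diff g(2)[of p q] by simp
  next
    case False
    have "\<bar>h p - h q\<bar> \<le> \<bar>f p - f q\<bar> + \<bar>molecule z x y f\<bar> * \<bar>g p - g q\<bar>"
      unfolding h_diff by (metis abs_mult abs_triangle_ineq4)
    also have "\<dots> \<le> lipnorm f * dist p q + lipnorm f * dist p q"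
      using abs_diff_le_lipnorm[OF f, of p q] mult_mono[OF m g(2)[of p q]] lipnorm_nonneg[OF f]
      by (intro add_mono) auto
    finally have "\<bar>s\<bar> * \<bar>h p - h q\<bar> \<le> (1 - k) / (2 * lipnorm f) * (2 * lipnorm f * dist p q)"
      using s by (intro mult_mono) auto
    then have "\<bar>s * (h p - h q)\<bar> \<le> (1 - k) * dist p q"
      using \<open>0 < lipnorm f\<close> by (simp add: abs_mult)
    moreover have "\<bar>(g p + s * h p) - (g q + s * h q)\<bar> \<le> \<bar>g p - g q\<bar> + \<bar>s * (h p - h q)\<bar>"
      unfolding diff by (rule abs_triangle_ineq)
    ultimately show ?thesis using g(3)[OF False] by (simp add: algebra_simps)
  qed
qed simp

lemma abs_diff_molecule_le:
  assumes peak: "peaking_function z x y k g" and "x \<noteq> y" "k < 1"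
    and \<nu>: "\<nu> \<in> dual_ball z" and f: "f \<in> lip0 z" and Lf: "0 < lipnorm f"
  shows "\<bar>\<nu> f - molecule z x y f\<bar> \<le> (2 / (1 - k) + 1) * (1 - \<nu> g) * lipnorm f"
proof -
  have g: "g \<in> lip0 z" by (rule peaking_functionD(1)[OF peak])
  have \<nu>_lipdual: "\<nu> \<in> lipdual z" using \<nu> by (simp add: dual_ball_def)
  have "\<nu> g \<le> 1" using dual_ball_le_lipnorm[OF \<nu> g] peaking_function_value[OF peak \<open>x \<noteq> y\<close>] by simp
  define m where "m = molecule z x y f"
  define h where "h = (\<lambda>p. f p - m * g p)"
  have h: "h \<in> lip0 z" unfolding h_def using lip0_lincomb[OF f g, of 1 "- m"] by simp
  define t where "t = (1 - k) / (2 * lipnorm f)"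
  have "0 < t" using Lf \<open>k < 1\<close> by (simp add: t_def)
  have "\<nu> g + s * \<nu> h \<le> 1" if "\<bar>s\<bar> \<le> t" for s
  proof -
    have "\<nu> g + s * \<nu> h = \<nu> (\<lambda>p. 1 * g p + s * h p)"
      using lipdual_lincomb[OF \<nu>_lipdual g h, of 1 s] by simp
    also have "\<dots> \<le> lipnorm (\<lambda>p. g p + s * h p)"
      using dual_ball_le_lipnorm[OF \<nu> lip0_lincomb[OF g h, of 1 s]] by simp
    also have "\<dots> \<le> 1"
      using peaking_function_perturb[OF peak \<open>x \<noteq> y\<close> f Lf, of s] that by (simp add: t_def h_def m_def)
    finally show ?thesis .
  qed
  from this[of t] this[of "- t"] have \<nu>_h: "\<bar>\<nu> h\<bar> \<le> (1 - \<nu> g) / t"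
    using \<open>0 < t\<close> by (simp add: abs_le_iff pos_le_divide_eq mult.commute)
  have "\<nu> f - m = \<nu> h - m * (1 - \<nu> g)"
    using lipdual_lincomb[OF \<nu>_lipdual f g, of 1 "- m"] by (simp add: h_def algebra_simps)
  then have "\<bar>\<nu> f - m\<bar> \<le> \<bar>\<nu> h\<bar> + \<bar>m\<bar> * (1 - \<nu> g)"
    using abs_triangle_ineq4[of "\<nu> h" "m * (1 - \<nu> g)"] \<open>\<nu> g \<le> 1\<close> by (simp add: abs_mult)
  also have "\<dots> \<le> (1 - \<nu> g) / t + lipnorm f * (1 - \<nu> g)"
    using \<nu>_h abs_molecule_le[OF f] \<open>\<nu> g \<le> 1\<close> unfolding m_def by (intro add_mono mult_right_mono) auto
  also have "\<dots> = (2 / (1 - k) + 1) * (1 - \<nu> g) * lipnorm f"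
    using Lf \<open>k < 1\<close> by (simp add: t_def field_simps)
  finally show ?thesis unfolding m_def .
qed

lemma dualnorm_diff_molecule_le:
  assumes peak: "peaking_function z x y k g" and "x \<noteq> y" "k < 1"
    and \<nu>: "\<nu> \<in> dual_ball z"
  shows "dualnorm z (\<lambda>f. \<nu> f - molecule z x y f) \<le> (2 / (1 - k) + 1) * (1 - \<nu> g)"
proof (rule dualnorm_leI)
  have "\<nu> g \<le> 1"
    using dual_ball_le_lipnorm[OF \<nu> peaking_functionD(1)[OF peak]] peaking_function_value[OF peak \<open>x \<noteq> y\<close>]
    by simp
  then show "0 \<le> (2 / (1 - k) + 1) * (1 - \<nu> g)" using \<open>k < 1\<close> by simp
  fix f assume f: "f \<in> lip0 z"
  show "\<bar>\<nu> f - molecule z x y f\<bar> \<le> (2 / (1 - k) + 1) * (1 - \<nu> g) * lipnorm f"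
  proof (cases "lipnorm f = 0")
    case True
    then show ?thesis using lipnorm_eq_0_imp[OF f] lipdual_zero_fun[of \<nu> z] \<nu>
      by (simp add: molecule_def dual_ball_def)
  next
    case False
    then show ?thesis using abs_diff_molecule_le[OF assms f] lipnorm_nonneg[OF f] by simp
  qed
qed

lemma molecule_strongly_exposed:
  assumes "\<mu> \<in> free_ball z" "\<mu> = molecule z x y" "x \<noteq> y" "0 < \<delta>"
    and gap: "\<And>p. p \<noteq> x \<Longrightarrow> p \<noteq> y \<Longrightarrow> dist x y + \<delta> \<le> dist x p + dist p y"
  shows "strongly_exposed z \<mu>"
proof -
  define k where "k = dist x y / (dist x y + \<delta>)"
  have "k < 1" using add_nonneg_pos[OF zero_le_dist assms(4), of x y] assms(4) by (simp add: k_def)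
  obtain g where peak: "peaking_function z x y k g"
    using peaking_function_exists[OF assms(3,4) gap] unfolding k_def by blast
  have g: "g \<in> lip0 z" "\<mu> g = 1" "lipnorm g = 1"
    using peaking_functionD(1)[OF peak] peaking_function_value[OF peak \<open>x \<noteq> y\<close>] assms(2) by auto
  have conv: "(\<lambda>n. dualnorm z (\<lambda>f. s n f - \<mu> f)) \<longlonglongrightarrow> 0"
    if s: "\<forall>n. s n \<in> free_ball z" and lim: "(\<lambda>n. s n g) \<longlonglongrightarrow> \<mu> g" for s
  proof (rule real_tendsto_sandwich[where f="\<lambda>n. 0" and h="\<lambda>n. (2 / (1 - k) + 1) * (1 - s n g)"])
    have "s n \<in> dual_ball z" for n using s by (simp add: free_ball_def)
    then show "\<forall>\<^sub>F n in sequentially. 0 \<le> dualnorm z (\<lambda>f. s n f - \<mu> f)"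
      "\<forall>\<^sub>F n in sequentially. dualnorm z (\<lambda>f. s n f - \<mu> f) \<le> (2 / (1 - k) + 1) * (1 - s n g)"
      using dualnorm_diff_molecule_le[OF peak \<open>x \<noteq> y\<close> \<open>k < 1\<close>] assms(1,2)
      by (simp_all add: dualnorm_nonneg lipdual_diff_fun free_ball_def dual_ball_def)
    show "(\<lambda>n. (2 / (1 - k) + 1) * (1 - s n g)) \<longlonglongrightarrow> 0"
      using tendsto_mult[OF tendsto_const tendsto_diff[OF tendsto_const lim], of "2 / (1 - k) + 1" 1] g(2)
      by simp
  qed simp
  have "\<mu> g = lipnorm g" using g by simp
  then show ?thesis unfolding strongly_exposed_def using assms(1) g(1) conv by blast
qed

lemma strongly_exposed_one_point:
  assumes "\<And>x::'a::metric_space. x = z" and \<mu>: "\<mu> \<in> free_ball z"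
  shows "strongly_exposed z \<mu>"
proof -
  have lip0_trivial: "f = (\<lambda>x. 0)" if "f \<in> lip0 z" for f
    using lip0_origin[OF that] assms(1) by (metis)
  have "dualnorm z (\<lambda>f. \<nu> f - \<mu> f) = 0" if "\<nu> \<in> free_ball z" for \<nu>
  proof (rule antisym)
    have "\<nu> \<in> lipdual z" "\<mu> \<in> lipdual z" using that \<mu> by (simp_all add: free_ball_def dual_ball_def)
    then show "0 \<le> dualnorm z (\<lambda>f. \<nu> f - \<mu> f)" by (intro dualnorm_nonneg lipdual_diff_fun)
    show "dualnorm z (\<lambda>f. \<nu> f - \<mu> f) \<le> 0"
    proof (rule dualnorm_leI)
      fix f assume "f \<in> lip0 z"
      then have "f = (\<lambda>x. 0)" by (rule lip0_trivial)
      then show "\<bar>\<nu> f - \<mu> f\<bar> \<le> 0 * lipnorm f"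
        using lipdual_zero_fun[OF \<open>\<nu> \<in> lipdual z\<close>] lipdual_zero_fun[OF \<open>\<mu> \<in> lipdual z\<close>] by simp
    qed simp
  qed
  moreover have "\<mu> (\<lambda>x. 0) = lipnorm (\<lambda>x::'a. 0)"
    using lipdual_zero_fun[of \<mu> z] \<mu> lipnorm_leI[of "\<lambda>x::'a. 0" 0] lipnorm_nonneg[OF lip0_zero_fun[of z]]
    by (simp add: free_ball_def dual_ball_def)
  ultimately show ?thesis unfolding strongly_exposed_def using \<mu> lip0_zero_fun by auto
qed

theorem proposition5p3:
  fixes z :: "'a::metric_space" and \<mu> :: "('a \<Rightarrow> real) \<Rightarrow> real"
  assumes "uniformly_discrete TYPE('a)"
    and "preserved_extreme z \<mu>"
  shows "strongly_exposed z \<mu>"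
proof (cases "\<exists>x::'a. x \<noteq> z")
  case True
  then obtain x0 :: 'a where "x0 \<noteq> z" by blast
  obtain x y where xy: "x \<noteq> y" "\<mu> = molecule z x y"
    using preserved_extreme_molecule[OF assms \<open>x0 \<noteq> z\<close>] by blast
  obtain \<delta> where "0 < \<delta>" "\<And>p. p \<noteq> x \<Longrightarrow> p \<noteq> y \<Longrightarrow> dist x y + \<delta> \<le> dist x p + dist p y"
    using preserved_extreme_molecule_gap[OF assms xy] by blast
  moreover have "\<mu> \<in> free_ball z" using assms(2) by (simp add: preserved_extreme_def)
  ultimately show ?thesis using molecule_strongly_exposed xy by blast
next
  case False
  then show ?thesis
    using strongly_exposed_one_point[of z \<mu>] assms(2) unfolding preserved_extreme_def by blast
qed

end
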